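(* Suppose Assumption A holds with constant $d$ and Assumption M holds with constant $\kappa^*$, let $r>0$, and suppose there is a constant $L^*\in[1,\infty)$ (depending on $\mathfrak a,\lambda$) with $\sup_{0<\epsilon<\epsilon_o}\epsilon\,m^*_\epsilon\Lambda_{(m^*_\epsilon)}/\Phi^*_\epsilon\le L^*$. Put $K^*:=10((1+1/d)\vee r/d^2)(1\vee r)(L^*/\kappa^* )$. Then $$\lim_{\epsilon\to0}\inf_{\theta^\circ\in\Theta^r_{\mathfrak a}}\mathbb E_{\theta^\circ}P_{\vartheta^{m^*_\epsilon}|Y}\Big((K^* )^{-1}\Phi^*_\epsilon\le\|\vartheta^{m^*_\epsilon}-\theta^\circ\|^2\le K^*\Phi^*_\epsilon\Big)=1.$$
   Context: Let $\ell^2$ be the space of square-summable real sequences with norm $\|\cdot\|$. Fix a bounded real sequence $\lambda=(\lambda_j)_{j\ge1}$ with $\lambda_j\ne0$ for all $j$ and a noise level $\epsilon\in(0,1)$. For a parameter $\theta^\circ$ the data $Y=(Y_j)_{j\ge1}$ satisfy $Y_j=\lambda_j\theta^\circ_j+\sqrt\epsilon\,\xi_j$ with $\xi_j$ i.i.d. $N(0,1)$; $\mathbb E_{\theta^\circ}$ denotes expectation under this law. Fix prior means $\eta=(\eta_j)_{j\ge1}$ and prior variances $\tau_j\in(0,\infty)$ (possibly depending on $\epsilon$). For $m\in\mathbb N$ the sieve prior is the law of $\vartheta^m$ with independent coordinates, $\vartheta^m_j\sim N(\eta_j,\tau_j)$ for $j\le m$ and $\vartheta^m_j=\eta_j$ a.s.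 for $j>m$, in the model $Y_j=\lambda_j\vartheta^m_j+\sqrt\epsilon\xi_j$ with $\vartheta^m$ independent of $(\xi_j)$. Put $\sigma_j:=(\lambda_j^2\epsilon^{-1}+\tau_j^{-1})^{-1}$ and $\theta^Y_j:=\sigma_j(\tau_j^{-1}\eta_j+\lambda_j\epsilon^{-1}Y_j)$. The posterior $P_{\vartheta^m|Y}$ makes the coordinates independent with $\vartheta^m_j\sim N(\theta^Y_j,\sigma_j)$ for $j\le m$ and $\vartheta^m_j=\eta_j$ for $j>m$. Let $\Lambda_j:=\lambda_j^{-2}$, $\Lambda_{(m)}:=\max_{1\le j\le m}\Lambda_j$, $\bar\Lambda_m:=m^{-1}\sum_{j=1}^m\Lambda_j$. Let $G_\epsilon:=\max\{1\le m\le\lfloor\epsilon^{-1}\rfloor:\epsilon\Lambda_{(m)}\le\Lambda_1\}$. Assumption A: there is a constant $d>0$ such that $\tau_j\ge d\,(\epsilon^{1/2}\Lambda_j^{1/2}\vee\epsilon\Lambda_j)$ for all $1\le j\le G_\epsilon$ and all $\epsilon\in(0,1)$. Let $\mathfrak a=(\mathfrak a_j)_{j\ge1}$ be strictly positive, non-increasing, with $\mathfrak a_1=1$ and $\mathfrak a_j\to0$. For $r>0$ the ellipsoid is $\Theta^r_{\mathfrak a}:=\{\theta:\sum_{j\ge1}(\theta_j-\eta_j)^2/\mathfrak a_j\le r\}$. Minimax quantities: $m^*_\epsilon:=\min\{m\ge1:\mathfrak a_m\vee\epsilon m\bar\Lambda_m\le\mathfrak a_k\vee\epsilon k\bar\Lambda_k\text{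 for all }k\ge1\}$ and $\Phi^*_\epsilon:=\mathfrak a_{m^*_\epsilon}\vee\epsilon m^*_\epsilon\bar\Lambda_{m^*_\epsilon}$. Fix $\epsilon_o\in(0,1)$. Assumption M: $\kappa^*:=\inf_{0<\epsilon<\epsilon_o}(\Phi^*_\epsilon)^{-1}[\mathfrak a_{m^*_\epsilon}\wedge\epsilon m^*_\epsilon\bar\Lambda_{m^*_\epsilon}]>0$. *)

theory Defs
  imports "HOL-Probability.Probability"
begin

text \<open>Sequences are functions nat => real indexed from 1; the value at index 0 is
  irrelevant (it never enters any quantity below).\<close>

definition sqnorm :: "(nat \<Rightarrow> real) \<Rightarrow> real" where
  "sqnorm x = (\<Sum>j. (x (Suc j))\<^sup>2)"

definition Lam :: "(nat \<Rightarrow> real) \<Rightarrow> nat \<Rightarrow> real" where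
  "Lam lam j = 1 / (lam j)\<^sup>2"

definition Lam_max :: "(nat \<Rightarrow> real) \<Rightarrow> nat \<Rightarrow> real" where
  "Lam_max lam m = Max (Lam lam ` {1..m})"

definition Lam_bar :: "(nat \<Rightarrow> real) \<Rightarrow> nat \<Rightarrow> real" where
  "Lam_bar lam m = (\<Sum>j=1..m. Lam lam j) / real m"

definition G_eps :: "(nat \<Rightarrow> real) \<Rightarrow> real \<Rightarrow> nat" where
  "G_eps lam eps = Max {m. 1 \<le> m \<and> m \<le> nat \<lfloor>1 / eps\<rfloor> \<and> eps * Lam_max lam m \<le> Lam lam 1}"

definition rate :: "(nat \<Rightarrow> real) \<Rightarrow> (nat \<Rightarrow> real) \<Rightarrow> real \<Rightarrow> nat \<Rightarrow> real" where
  "rate a lam eps m = max (a m) (eps * real m * Lam_bar lam m)"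

definition m_star :: "(nat \<Rightarrow> real) \<Rightarrow> (nat \<Rightarrow> real) \<Rightarrow> real \<Rightarrow> nat" where
  "m_star a lam eps = (LEAST m. 1 \<le> m \<and> (\<forall>k\<ge>1. rate a lam eps m \<le> rate a lam eps k))"

definition Phi_star :: "(nat \<Rightarrow> real) \<Rightarrow> (nat \<Rightarrow> real) \<Rightarrow> real \<Rightarrow> real" where
  "Phi_star a lam eps = rate a lam eps (m_star a lam eps)"

definition kappa_star :: "(nat \<Rightarrow> real) \<Rightarrow> (nat \<Rightarrow> real) \<Rightarrow> real \<Rightarrow> real" where
  "kappa_star a lam eps_o = (INF eps \<in> {0<..<eps_o}.
     min (a (m_star a lam eps)) (eps * real (m_star a lam eps) * Lam_bar lam (m_star a lam eps))
       / Phi_star a lam eps)"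

definition ellipsoid :: "(nat \<Rightarrow> real) \<Rightarrow> (nat \<Rightarrow> real) \<Rightarrow> real \<Rightarrow> (nat \<Rightarrow> real) set" where
  "ellipsoid a eta r = {\<theta>. summable (\<lambda>j. (\<theta> (Suc j) - eta (Suc j))\<^sup>2 / a (Suc j)) \<and>
       (\<Sum>j. (\<theta> (Suc j) - eta (Suc j))\<^sup>2 / a (Suc j)) \<le> r}"

text \<open>Law of the data Y with Y_j = lam_j theta_j + sqrt eps xi_j (xi_j iid N(0,1)).\<close>
definition data_law :: "(nat \<Rightarrow> real) \<Rightarrow> real \<Rightarrow> (nat \<Rightarrow> real) \<Rightarrow> (nat \<Rightarrow> real) measure" where
  "data_law lam eps \<theta> = (\<Pi>\<^sub>M j\<in>UNIV. density lborel (normal_density (lam j * \<theta> j) (sqrt eps)))"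

definition post_var :: "(nat \<Rightarrow> real) \<Rightarrow> (real \<Rightarrow> nat \<Rightarrow> real) \<Rightarrow> real \<Rightarrow> nat \<Rightarrow> real" where
  "post_var lam tau eps j = 1 / ((lam j)\<^sup>2 / eps + 1 / tau eps j)"

definition post_mean :: "(nat \<Rightarrow> real) \<Rightarrow> (nat \<Rightarrow> real) \<Rightarrow> (real \<Rightarrow> nat \<Rightarrow> real) \<Rightarrow> real
    \<Rightarrow> (nat \<Rightarrow> real) \<Rightarrow> nat \<Rightarrow> real" where
  "post_mean lam eta tau eps Y j = post_var lam tau eps j * (eta j / tau eps j + lam j * Y j / eps)"

text \<open>Posterior of the sieve prior with dimension m given data Y:
  independent coordinates, N(post_mean, post_var) for 1 <= j <= m, point mass at eta_j otherwise.
  (normal_density takes the standard deviation.)\<close>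
definition posterior :: "(nat \<Rightarrow> real) \<Rightarrow> (nat \<Rightarrow> real) \<Rightarrow> (real \<Rightarrow> nat \<Rightarrow> real) \<Rightarrow> real
    \<Rightarrow> nat \<Rightarrow> (nat \<Rightarrow> real) \<Rightarrow> (nat \<Rightarrow> real) measure" where
  "posterior lam eta tau eps m Y = (\<Pi>\<^sub>M j\<in>UNIV.
     (if 1 \<le> j \<and> j \<le> m
      then density lborel (normal_density (post_mean lam eta tau eps Y j) (sqrt (post_var lam tau eps j)))
      else return borel (eta j)))"

end

theory Submission
  imports Defs
begin

text \<open>Write \<open>m = m_star\<close>, \<open>\<Phi> = Phi_star\<close>. Beyond \<open>m\<close> the posterior sits at \<open>\<eta>\<close>, contributing a
  deterministic tail at most \<open>r \<Phi>\<close>; below \<open>m\<close> it is a product of Gaussians, so by Chebyshev its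
  squared error concentrates around \<open>\<Sum> \<sigma>\<^sub>j + \<parallel>\<theta>\<^sup>Y - \<theta>\<parallel>\<^sup>2\<close>. Assumption M gives
  \<open>\<Sum> \<sigma>\<^sub>j \<ge> d \<kappa> \<Phi> / (1 + d)\<close>, and Assumption A bounds the bias of \<open>\<theta>\<^sup>Y\<close> by \<open>\<Phi>\<close>, so that, again by
  Chebyshev but under the data law, \<open>\<parallel>\<theta>\<^sup>Y - \<theta>\<parallel>\<^sup>2 = O(\<Phi>)\<close> outside an event of probability
  \<open>O(L / m)\<close>. Every coordinate variance is at most \<open>eps Lam_max m \<le> L \<Phi> / m\<close>, so all failure
  probabilities are \<open>O(1 / m)\<close> uniformly over the ellipsoid, and \<open>m \<longrightarrow> \<infinity>\<close> as \<open>eps \<longrightarrow> 0\<close>.\<close>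

section \<open>Sums over independent coordinates\<close>

lemma has_bochner_integral_PiM_prod:
  fixes M :: "'i \<Rightarrow> 'a measure" and h :: "'i \<Rightarrow> 'a \<Rightarrow> real"
  assumes M_prob: "\<And>i. prob_space (M i)" and J: "finite J"
    and h: "\<And>i. i \<in> J \<Longrightarrow> integrable (M i) (h i)"
  shows "has_bochner_integral (PiM UNIV M) (\<lambda>x. \<Prod>i\<in>J. h i (x i)) (\<Prod>i\<in>J. integral\<^sup>L (M i) (h i))"
proof -
  interpret product_prob_space M UNIV by (simp add: M_prob product_prob_spaceI)
  have [measurable]: "\<And>i. i \<in> J \<Longrightarrow> h i \<in> borel_measurable (M i)" using h by auto
  have F: "(\<lambda>y. \<Prod>i\<in>J. h i (y i)) \<in> borel_measurable (PiM J M)"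
    by (intro borel_measurable_prod measurable_compose[OF measurable_component_singleton]) auto
  have R: "(\<lambda>x. restrict x J) \<in> measurable (PiM UNIV M) (PiM J M)"
    by (rule measurable_restrict_subset) auto
  have D: "distr (PiM UNIV M) (PiM J M) (\<lambda>x. restrict x J) = PiM J M"
    by (rule distr_PiM_restrict_finite[OF J]) auto
  have eq: "(\<lambda>x. \<Prod>i\<in>J. h i (x i)) = (\<lambda>x. (\<lambda>y. \<Prod>i\<in>J. h i (y i)) (restrict x J))"
    by auto
  have "has_bochner_integral (PiM J M) (\<lambda>y. \<Prod>i\<in>J. h i (y i)) (\<Prod>i\<in>J. integral\<^sup>L (M i) (h i))"
    using product_integrable_prod[OF J h] product_integral_prod[OF J h]
    by (simp add: has_bochner_integral_iff)
  then show ?thesis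
    unfolding eq has_bochner_integral_iff
    using integrable_distr_eq[OF R F] integral_distr[OF R F] D by simp
qed

text \<open>The cross terms of the second moment vanish by independence of the coordinates.\<close>
lemma prob_PiM_sum_deviation_le:
  fixes M :: "'i \<Rightarrow> 'a measure" and f :: "'i \<Rightarrow> 'a \<Rightarrow> real"
  assumes M_prob: "\<And>i. prob_space (M i)" and J: "finite J"
    and f: "\<And>i. i \<in> J \<Longrightarrow> integrable (M i) (f i)"
    and f2: "\<And>i. i \<in> J \<Longrightarrow> integrable (M i) (\<lambda>x. (f i x)\<^sup>2)"
    and t: "0 < t"
  shows "measure (PiM UNIV M) {x \<in> space (PiM UNIV M).
      t \<le> \<bar>(\<Sum>i\<in>J. f i (x i)) - (\<Sum>i\<in>J. integral\<^sup>L (M i) (f i))\<bar>}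
    \<le> (\<Sum>i\<in>J. integral\<^sup>L (M i) (\<lambda>x. (f i x - integral\<^sup>L (M i) (f i))\<^sup>2)) / t\<^sup>2"
proof -
  interpret product_prob_space M UNIV by (simp add: M_prob product_prob_spaceI)
  define g where "g i x = f i x - integral\<^sup>L (M i) (f i)" for i x
  have g: "integrable (M i) (g i)" "integral\<^sup>L (M i) (g i) = 0" if "i \<in> J" for i
    unfolding g_def using f[OF that] M.prob_space[of i] by auto
  have g2: "integrable (M i) (\<lambda>x. g i x * g i x)" if "i \<in> J" for i
  proof -
    have "integrable (M i) (\<lambda>x. (f i x)\<^sup>2 - 2 * integral\<^sup>L (M i) (f i) * f i x + (integral\<^sup>L (M i) (f i))\<^sup>2)"
      using f[OF that] f2[OF that] by auto
    then show ?thesis unfolding g_def by (simp add: power2_eq_square algebra_simps)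
  qed
  have cross: "has_bochner_integral (PiM UNIV M) (\<lambda>x. g i (x i) * g k (x k))
      (if i = k then integral\<^sup>L (M i) (\<lambda>x. g i x * g i x) else 0)"
    if "i \<in> J" "k \<in> J" for i k
  proof (cases "i = k")
    case True
    then show ?thesis
      using has_bochner_integral_PiM_prod[where M=M, OF M_prob, where J="{i}" and h="\<lambda>_ x. g i x * g i x"] g2 that by simp
  next
    case False
    then show ?thesis
      using has_bochner_integral_PiM_prod[where M=M, OF M_prob, where J="{i,k}" and h=g] g that by fastforce
  qed
  define X where "X x = (\<Sum>i\<in>J. g i (x i))" for x
  have X2: "(X x)\<^sup>2 = (\<Sum>i\<in>J. \<Sum>k\<in>J. g i (x i) * g k (x k))" for x
    unfolding X_def power2_eq_square sum_product ..
  have "has_bochner_integral (PiM UNIV M) (\<lambda>x. (X x)\<^sup>2)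
      (\<Sum>i\<in>J. \<Sum>k\<in>J. if i = k then integral\<^sup>L (M i) (\<lambda>x. g i x * g i x) else 0)"
    unfolding X2 using cross by (intro has_bochner_integral_sum) blast
  then have X2int: "integrable (PiM UNIV M) (\<lambda>x. (X x)\<^sup>2)"
    and X2val: "integral\<^sup>L (PiM UNIV M) (\<lambda>x. (X x)\<^sup>2) = (\<Sum>i\<in>J. integral\<^sup>L (M i) (\<lambda>x. g i x * g i x))"
    using J by (auto simp: has_bochner_integral_iff)
  have "t \<le> \<bar>X x\<bar> \<longleftrightarrow> t\<^sup>2 \<le> (X x)\<^sup>2" for x
    using t by (metis abs_le_square_iff abs_of_pos)
  then have "{x \<in> space (PiM UNIV M). t \<le> \<bar>(\<Sum>i\<in>J. f i (x i)) - (\<Sum>i\<in>J. integral\<^sup>L (M i) (f i))\<bar>}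
      = {x \<in> space (PiM UNIV M). t\<^sup>2 \<le> (X x)\<^sup>2}"
    by (auto simp: X_def g_def sum_subtractf)
  also have "measure (PiM UNIV M) \<dots> \<le> integral\<^sup>L (PiM UNIV M) (\<lambda>x. (X x)\<^sup>2) / t\<^sup>2"
    by (rule integral_Markov_inequality_measure[OF X2int]) (use t in auto)
  finally show ?thesis
    unfolding X2val g_def by (simp add: power2_eq_square)
qed

section \<open>Gaussian moments and Gaussian products\<close>

lemma has_bochner_integral_normal_quartic:
  fixes \<mu> s c0 c1 c2 c3 c4 :: real
  assumes s: "0 < s"
  shows "has_bochner_integral lborel
     (\<lambda>x. normal_density \<mu> s x * (c0 + c1 * (x-\<mu>) + c2 * (x-\<mu>)^2 + c3 * (x-\<mu>)^3 + c4 * (x-\<mu>)^4))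
     (c0 + c2 * s^2 + 3 * c4 * s^4)"
proof -
  have m0: "has_bochner_integral lborel (\<lambda>x. normal_density \<mu> s x * (x-\<mu>)^(2*0)) 1"
    using normal_moment_even[OF s, of \<mu> 0] by simp
  have m2: "has_bochner_integral lborel (\<lambda>x. normal_density \<mu> s x * (x-\<mu>)^(2*1)) (s^2)"
    using normal_moment_even[OF s, of \<mu> 1] s by (simp add: field_simps)
  have "fact (2 * 2) / ((2 / s\<^sup>2) ^ 2 * fact 2) = (3 * s^4::real)"
    using s by (simp add: fact_numeral field_simps power2_eq_square power4_eq_xxxx)
  then have m4: "has_bochner_integral lborel (\<lambda>x. normal_density \<mu> s x * (x-\<mu>)^(2*2)) (3 * s^4)"
    using normal_moment_even[OF s, of \<mu> 2] by simp
  have m1: "has_bochner_integral lborel (\<lambda>x. normal_density \<mu> s x * (x-\<mu>)^(2*0+1)) 0"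
    using normal_moment_odd[OF s, of \<mu> 0] by simp
  have m3: "has_bochner_integral lborel (\<lambda>x. normal_density \<mu> s x * (x-\<mu>)^(2*1+1)) 0"
    using normal_moment_odd[OF s, of \<mu> 1] by simp
  have "has_bochner_integral lborel
     (\<lambda>x. c0 * (normal_density \<mu> s x * (x-\<mu>)^(2*0)) + c1 * (normal_density \<mu> s x * (x-\<mu>)^(2*0+1))
        + c2 * (normal_density \<mu> s x * (x-\<mu>)^(2*1)) + c3 * (normal_density \<mu> s x * (x-\<mu>)^(2*1+1))
        + c4 * (normal_density \<mu> s x * (x-\<mu>)^(2*2)))
     (c0 * 1 + c1 * 0 + c2 * s^2 + c3 * 0 + c4 * (3 * s^4))"
    by (intro has_bochner_integral_add has_bochner_integral_mult_right m0 m1 m2 m3 m4)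
  then show ?thesis
    by (rule has_bochner_integral_cong[THEN iffD1, rotated -1]) (simp_all add: distrib_left mult_ac)
qed

lemma has_bochner_integral_normal_iff:
  fixes f :: "real \<Rightarrow> real"
  assumes "f \<in> borel_measurable borel"
  shows "has_bochner_integral (density lborel (normal_density \<mu> s)) f I \<longleftrightarrow>
    has_bochner_integral lborel (\<lambda>x. normal_density \<mu> s x * f x) I"
  using assms integrable_density[of f lborel "normal_density \<mu> s"]
    integral_density[of f lborel "normal_density \<mu> s"]
  by (auto simp: has_bochner_integral_iff)

text \<open>Each integrand is a quartic polynomial in \<open>x - \<mu>\<close>, whose Gaussian moments are known.\<close>
lemma normal_affine_sq_moments:
  fixes \<mu> s \<alpha> \<beta> :: real
  assumes s: "0 < s"
  defines "N \<equiv> density lborel (normal_density \<mu> s)" and "\<gamma> \<equiv> \<alpha> * \<mu> + \<beta>"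
  shows "has_bochner_integral N (\<lambda>x. (\<alpha>*x+\<beta>)\<^sup>2) ((\<alpha> * s)\<^sup>2 + \<gamma>\<^sup>2)"
    and "integrable N (\<lambda>x. ((\<alpha>*x+\<beta>)\<^sup>2)\<^sup>2)"
    and "has_bochner_integral N (\<lambda>x. ((\<alpha>*x+\<beta>)\<^sup>2 - ((\<alpha> * s)\<^sup>2 + \<gamma>\<^sup>2))\<^sup>2)
           (2 * (\<alpha> * s)^4 + 4 * (\<alpha> * s)\<^sup>2 * \<gamma>\<^sup>2)"
proof -
  have "has_bochner_integral lborel
     (\<lambda>x. normal_density \<mu> s x * (\<gamma>\<^sup>2 + (2*\<alpha>*\<gamma>) * (x-\<mu>) + \<alpha>\<^sup>2 * (x-\<mu>)^2 + 0 * (x-\<mu>)^3 + 0 * (x-\<mu>)^4))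
     (\<gamma>\<^sup>2 + \<alpha>\<^sup>2 * s^2 + 3 * 0 * s^4)"
    by (rule has_bochner_integral_normal_quartic[OF s])
  moreover have "\<gamma>\<^sup>2 + (2*\<alpha>*\<gamma>) * (x-\<mu>) + \<alpha>\<^sup>2 * (x-\<mu>)^2 + 0 * (x-\<mu>)^3 + 0 * (x-\<mu>)^4 = (\<alpha>*x+\<beta>)\<^sup>2" for x
    unfolding \<gamma>_def by algebra
  ultimately show "has_bochner_integral N (\<lambda>x. (\<alpha>*x+\<beta>)\<^sup>2) ((\<alpha> * s)\<^sup>2 + \<gamma>\<^sup>2)"
    unfolding N_def by (subst has_bochner_integral_normal_iff) (auto simp: power_mult_distrib add.commute)
  have "has_bochner_integral lborel
     (\<lambda>x. normal_density \<mu> s x * (\<gamma>^4 + (4*\<alpha>*\<gamma>^3) * (x-\<mu>) + (6*\<alpha>\<^sup>2*\<gamma>\<^sup>2) * (x-\<mu>)^2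
         + (4*\<alpha>^3*\<gamma>) * (x-\<mu>)^3 + \<alpha>^4 * (x-\<mu>)^4))
     (\<gamma>^4 + (6*\<alpha>\<^sup>2*\<gamma>\<^sup>2) * s^2 + 3 * \<alpha>^4 * s^4)"
    by (rule has_bochner_integral_normal_quartic[OF s])
  moreover have "\<gamma>^4 + (4*\<alpha>*\<gamma>^3) * (x-\<mu>) + (6*\<alpha>\<^sup>2*\<gamma>\<^sup>2) * (x-\<mu>)^2
         + (4*\<alpha>^3*\<gamma>) * (x-\<mu>)^3 + \<alpha>^4 * (x-\<mu>)^4 = ((\<alpha>*x+\<beta>)\<^sup>2)\<^sup>2" for x
    unfolding \<gamma>_def by algebra
  ultimately have "has_bochner_integral N (\<lambda>x. ((\<alpha>*x+\<beta>)\<^sup>2)\<^sup>2)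
      (\<gamma>^4 + (6*\<alpha>\<^sup>2*\<gamma>\<^sup>2) * s^2 + 3 * \<alpha>^4 * s^4)"
    unfolding N_def by (subst has_bochner_integral_normal_iff) auto
  then show "integrable N (\<lambda>x. ((\<alpha>*x+\<beta>)\<^sup>2)\<^sup>2)" by (simp add: has_bochner_integral_iff)
  have "has_bochner_integral lborel
     (\<lambda>x. normal_density \<mu> s x * (\<alpha>^4 * s^4 + (-4*\<alpha>^3*\<gamma>* s\<^sup>2) * (x-\<mu>) + (4*\<alpha>\<^sup>2*\<gamma>\<^sup>2 - 2*\<alpha>^4 * s\<^sup>2) * (x-\<mu>)^2
         + (4*\<alpha>^3*\<gamma>) * (x-\<mu>)^3 + \<alpha>^4 * (x-\<mu>)^4))
     (\<alpha>^4 * s^4 + (4*\<alpha>\<^sup>2*\<gamma>\<^sup>2 - 2*\<alpha>^4 * s\<^sup>2) * s^2 + 3 * \<alpha>^4 * s^4)"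
    by (rule has_bochner_integral_normal_quartic[OF s])
  moreover have "\<alpha>^4 * s^4 + (-4*\<alpha>^3*\<gamma>* s\<^sup>2) * (x-\<mu>) + (4*\<alpha>\<^sup>2*\<gamma>\<^sup>2 - 2*\<alpha>^4 * s\<^sup>2) * (x-\<mu>)^2
         + (4*\<alpha>^3*\<gamma>) * (x-\<mu>)^3 + \<alpha>^4 * (x-\<mu>)^4 = ((\<alpha>*x+\<beta>)\<^sup>2 - ((\<alpha> * s)\<^sup>2 + \<gamma>\<^sup>2))\<^sup>2" for x
    unfolding \<gamma>_def by algebra
  moreover have "\<alpha>^4 * s^4 + (4*\<alpha>\<^sup>2*\<gamma>\<^sup>2 - 2*\<alpha>^4 * s\<^sup>2) * s^2 + 3 * \<alpha>^4 * s^4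
      = 2 * (\<alpha> * s)^4 + 4 * (\<alpha> * s)\<^sup>2 * \<gamma>\<^sup>2"
    by algebra
  ultimately show "has_bochner_integral N (\<lambda>x. ((\<alpha>*x+\<beta>)\<^sup>2 - ((\<alpha> * s)\<^sup>2 + \<gamma>\<^sup>2))\<^sup>2)
           (2 * (\<alpha> * s)^4 + 4 * (\<alpha> * s)\<^sup>2 * \<gamma>\<^sup>2)"
    unfolding N_def by (subst has_bochner_integral_normal_iff) auto
qed

text \<open>Each summand has variance \<open>2 c\<^sup>2 + 4 c \<gamma>\<^sup>2 \<le> 4 ell (c + \<gamma>\<^sup>2)\<close> with \<open>c = (\<alpha> s)\<^sup>2 \<le> ell\<close>, so
  Chebyshev applies with variance at most \<open>4 ell E\<close>.\<close>
lemma prob_PiM_normal_sum_sq_deviation_le: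
  fixes P :: "'i \<Rightarrow> real measure" and \<mu> s \<alpha> \<beta> :: "'i \<Rightarrow> real"
  assumes P_prob: "\<And>j. prob_space (P j)" and J: "finite J"
    and PJ: "\<And>j. j \<in> J \<Longrightarrow> P j = density lborel (normal_density (\<mu> j) (s j))"
    and s: "\<And>j. j \<in> J \<Longrightarrow> 0 < s j" and ell: "\<And>j. j \<in> J \<Longrightarrow> (\<alpha> j * s j)\<^sup>2 \<le> ell"
    and E: "E = (\<Sum>j\<in>J. (\<alpha> j * s j)\<^sup>2 + (\<alpha> j * \<mu> j + \<beta> j)\<^sup>2)"
    and t: "0 < t"
  shows "measure (PiM UNIV P) {x \<in> space (PiM UNIV P). t \<le> \<bar>(\<Sum>j\<in>J. (\<alpha> j * x j + \<beta> j)\<^sup>2) - E\<bar>}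
    \<le> 4 * ell * E / t\<^sup>2"
proof -
  define f where "f j x = (\<alpha> j * x + \<beta> j)\<^sup>2" for j x
  have moments:
    "has_bochner_integral (P j) (f j) ((\<alpha> j * s j)\<^sup>2 + (\<alpha> j * \<mu> j + \<beta> j)\<^sup>2)"
    "integrable (P j) (\<lambda>x. (f j x)\<^sup>2)"
    "has_bochner_integral (P j) (\<lambda>x. (f j x - ((\<alpha> j * s j)\<^sup>2 + (\<alpha> j * \<mu> j + \<beta> j)\<^sup>2))\<^sup>2)
       (2 * (\<alpha> j * s j)^4 + 4 * (\<alpha> j * s j)\<^sup>2 * (\<alpha> j * \<mu> j + \<beta> j)\<^sup>2)"
    if "j \<in> J" for j
    using normal_affine_sq_moments[OF s[OF that], of "\<mu> j" "\<alpha> j" "\<beta> j"]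
    unfolding f_def PJ[OF that] by auto
  have mean: "integral\<^sup>L (P j) (f j) = (\<alpha> j * s j)\<^sup>2 + (\<alpha> j * \<mu> j + \<beta> j)\<^sup>2" if "j \<in> J" for j
    using moments(1)[OF that] by (simp add: has_bochner_integral_iff)
  have "(\<Sum>j\<in>J. integral\<^sup>L (P j) (\<lambda>x. (f j x - integral\<^sup>L (P j) (f j))\<^sup>2))
      = (\<Sum>j\<in>J. 2 * (\<alpha> j * s j)^4 + 4 * (\<alpha> j * s j)\<^sup>2 * (\<alpha> j * \<mu> j + \<beta> j)\<^sup>2)"
    using moments(3) mean by (intro sum.cong) (auto simp: has_bochner_integral_iff)
  also have "\<dots> \<le> (\<Sum>j\<in>J. 4 * ell * ((\<alpha> j * s j)\<^sup>2 + (\<alpha> j * \<mu> j + \<beta> j)\<^sup>2))"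
  proof (rule sum_mono)
    fix j assume j: "j \<in> J"
    have "(\<alpha> j * s j)^4 \<le> ell * (\<alpha> j * s j)\<^sup>2"
      using mult_right_mono[OF ell[OF j], of "(\<alpha> j * s j)\<^sup>2"] by (simp add: power4_eq_xxxx power2_eq_square)
    moreover have "(\<alpha> j * s j)\<^sup>2 * (\<alpha> j * \<mu> j + \<beta> j)\<^sup>2 \<le> ell * (\<alpha> j * \<mu> j + \<beta> j)\<^sup>2"
      using ell[OF j] by (simp add: mult_right_mono)
    moreover have "0 \<le> (\<alpha> j * s j)^4" by simp
    moreover have "4 * ell * ((\<alpha> j * s j)\<^sup>2 + (\<alpha> j * \<mu> j + \<beta> j)\<^sup>2)
        = 4 * (ell * (\<alpha> j * s j)\<^sup>2) + 4 * (ell * (\<alpha> j * \<mu> j + \<beta> j)\<^sup>2)"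
      by (simp add: algebra_simps)
    ultimately show "2 * (\<alpha> j * s j)^4 + 4 * (\<alpha> j * s j)\<^sup>2 * (\<alpha> j * \<mu> j + \<beta> j)\<^sup>2
        \<le> 4 * ell * ((\<alpha> j * s j)\<^sup>2 + (\<alpha> j * \<mu> j + \<beta> j)\<^sup>2)"
      by linarith
  qed
  also have "\<dots> = 4 * ell * E" unfolding E by (simp add: sum_distrib_left)
  finally have var: "(\<Sum>j\<in>J. integral\<^sup>L (P j) (\<lambda>x. (f j x - integral\<^sup>L (P j) (f j))\<^sup>2)) \<le> 4 * ell * E" .
  have "measure (PiM UNIV P) {x \<in> space (PiM UNIV P).
      t \<le> \<bar>(\<Sum>j\<in>J. f j (x j)) - (\<Sum>j\<in>J. integral\<^sup>L (P j) (f j))\<bar>}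
    \<le> (\<Sum>j\<in>J. integral\<^sup>L (P j) (\<lambda>x. (f j x - integral\<^sup>L (P j) (f j))\<^sup>2)) / t\<^sup>2"
    using moments(1,2) by (intro prob_PiM_sum_deviation_le[OF P_prob J _ _ t]) (auto simp: has_bochner_integral_iff)
  also have "\<dots> \<le> 4 * ell * E / t\<^sup>2"
    using var by (simp add: divide_right_mono)
  finally show ?thesis
    using mean E by (simp add: f_def)
qed

lemma prob_PiM_normal_sum_sq_band_ge:
  fixes P :: "'i \<Rightarrow> real measure" and \<mu> s \<theta> :: "'i \<Rightarrow> real"
  assumes P_prob: "\<And>j. prob_space (P j)" and P_sets: "\<And>j. sets (P j) = sets borel" and J: "finite J"
    and PJ: "\<And>j. j \<in> J \<Longrightarrow> P j = density lborel (normal_density (\<mu> j) (s j))"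
    and s: "\<And>j. j \<in> J \<Longrightarrow> 0 < s j" and ell: "\<And>j. j \<in> J \<Longrightarrow> (s j)\<^sup>2 \<le> ell"
    and E: "E = (\<Sum>j\<in>J. (s j)\<^sup>2 + (\<mu> j - \<theta> j)\<^sup>2)" and E_pos: "0 < E"
    and T: "0 \<le> T" and lo: "lo \<le> E / 2" and hi: "E + T \<le> hi / 2"
  shows "1 - 16 * ell / E - 8 * ell / hi \<le> measure (PiM UNIV P)
     {v \<in> space (PiM UNIV P). lo \<le> (\<Sum>j\<in>J. (v j - \<theta> j)\<^sup>2) + T \<and> (\<Sum>j\<in>J. (v j - \<theta> j)\<^sup>2) + T \<le> hi}"
proof -
  interpret product_prob_space P UNIV by (simp add: P_prob product_prob_spaceI)
  have [measurable]: "(\<lambda>v. v j) \<in> borel_measurable (PiM UNIV P)" for j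
    using measurable_component_singleton[of j UNIV P] measurable_cong_sets[OF refl P_sets] by blast
  define Q where "Q v = (\<Sum>j\<in>J. (v j - \<theta> j)\<^sup>2)" for v
  have dev: "measure (PiM UNIV P) {v \<in> space (PiM UNIV P). t \<le> \<bar>Q v - E\<bar>} \<le> 4 * ell * E / t\<^sup>2"
    if "0 < t" for t
    using prob_PiM_normal_sum_sq_deviation_le[OF P_prob J PJ s _ _ that, where \<alpha>="\<lambda>_. 1" and ell=ell and \<beta>="\<lambda>j. - \<theta> j" and E=E] ell E
    by (simp add: Q_def)
  have hi_pos: "0 < hi" using hi E_pos T by linarith
  have ell_nonneg: "0 \<le> ell"
  proof -
    obtain j where "j \<in> J" using E_pos E by fastforce
    then show ?thesis using ell[of j] by (meson order_trans zero_le_power2)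
  qed
  define Band where "Band = {v \<in> space (PiM UNIV P). lo \<le> Q v + T \<and> Q v + T \<le> hi}"
  define Low where "Low = {v \<in> space (PiM UNIV P). E / 2 \<le> \<bar>Q v - E\<bar>}"
  define High where "High = {v \<in> space (PiM UNIV P). hi / 2 \<le> \<bar>Q v - E\<bar>}"
  have sets: "Band \<in> sets (PiM UNIV P)" "Low \<in> sets (PiM UNIV P)" "High \<in> sets (PiM UNIV P)"
    unfolding Band_def Low_def High_def Q_def by measurable
  have "space (PiM UNIV P) \<subseteq> Band \<union> (Low \<union> High)"
    using lo hi T by (auto simp: Band_def Low_def High_def abs_if split: if_splits)
  then have "1 \<le> measure (PiM UNIV P) (Band \<union> (Low \<union> High))"
    using P.finite_measure_mono[of "space (PiM UNIV P)"] sets by (simp add: P.prob_space)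
  also have "\<dots> \<le> measure (PiM UNIV P) Band + (measure (PiM UNIV P) Low + measure (PiM UNIV P) High)"
    using sets by (intro order.trans[OF measure_Un_le] add_left_mono measure_Un_le) auto
  finally have cover: "1 \<le> measure (PiM UNIV P) Band + measure (PiM UNIV P) Low + measure (PiM UNIV P) High"
    by simp
  have "measure (PiM UNIV P) Low \<le> 4 * ell * E / (E / 2)\<^sup>2"
    unfolding Low_def using E_pos by (intro dev) simp
  also have "\<dots> = 16 * ell / E" using E_pos by (simp add: power2_eq_square field_simps)
  finally have low: "measure (PiM UNIV P) Low \<le> 16 * ell / E" .
  have "measure (PiM UNIV P) High \<le> 4 * ell * E / (hi / 2)\<^sup>2"
    unfolding High_def using hi_pos by (intro dev) simp
  also have "\<dots> \<le> 4 * ell * (hi / 2) / (hi / 2)\<^sup>2"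
    using hi T ell_nonneg by (intro divide_right_mono mult_left_mono) auto
  also have "\<dots> = 8 * ell / hi" using hi_pos by (simp add: power2_eq_square field_simps)
  finally have high: "measure (PiM UNIV P) High \<le> 8 * ell / hi" .
  show ?thesis using cover low high unfolding Band_def Q_def by linarith
qed

lemma distr_std_normal_affine:
  fixes m s :: real
  assumes s: "0 < s"
  shows "distr (density lborel std_normal_density) lborel (\<lambda>z. m + s * z) = density lborel (normal_density m s)"
proof -
  interpret prob_space "density lborel std_normal_density"
    by (rule prob_space_normal_density) simp
  have "distributed (density lborel std_normal_density) lborel (\<lambda>x. x) std_normal_density"
    unfolding distributed_def by (auto simp: distr_id2 intro!: density_cong)
  from normal_density_affine[OF this, of s m] s show ?thesis
    unfolding distributed_def by simp
qed

lemma PiM_normal_eq_distr_affine: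
  fixes \<mu> s :: "'i \<Rightarrow> real"
  assumes J: "finite J" and s: "\<And>j. 0 < s j"
  shows "PiM J (\<lambda>j. density lborel (normal_density (\<mu> j) (s j))) =
    distr (PiM J (\<lambda>_. density lborel std_normal_density)) (PiM J (\<lambda>_. borel)) (\<lambda>z. \<lambda>j\<in>J. \<mu> j + s j * z j)"
proof -
  define N where "N j = density lborel (normal_density (\<mu> j) (s j))" for j
  define Z where "Z = density lborel std_normal_density"
  define G where "G z = (\<lambda>j\<in>J. \<mu> j + s j * z j)" for z
  interpret N: product_prob_space N UNIV
    by (intro product_prob_spaceI) (auto simp: N_def s intro!: prob_space_normal_density)
  interpret Z: product_prob_space "\<lambda>_. Z" UNIV
    by (intro product_prob_spaceI) (auto simp: Z_def intro!: prob_space_normal_density)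
  have G: "G \<in> measurable (PiM J (\<lambda>_. Z)) (PiM J (\<lambda>_. borel))"
    unfolding G_def by (intro measurable_restrict) (auto simp: Z_def)
  have "distr (PiM J (\<lambda>_. Z)) (PiM J (\<lambda>_. borel)) G = PiM J N"
  proof (rule N.PiM_eqI[OF J])
    show "sets (distr (PiM J (\<lambda>_. Z)) (PiM J (\<lambda>_. borel)) G) = sets (PiM J N)"
      by (auto simp: N_def intro!: sets_PiM_cong)
    fix A assume "\<And>i. i \<in> J \<Longrightarrow> A i \<in> sets (N i)"
    then have A: "\<And>i. i \<in> J \<Longrightarrow> A i \<in> sets borel" by (auto simp: N_def)
    have pre: "(\<lambda>z. \<mu> j + s j * z) -` A j \<in> sets borel" if "j \<in> J" for j
      by (rule measurable_sets_borel[OF _ A[OF that]]) simp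
    have "emeasure (distr (PiM J (\<lambda>_. Z)) (PiM J (\<lambda>_. borel)) G) (Pi\<^sub>E J A)
        = emeasure (PiM J (\<lambda>_. Z)) (G -` Pi\<^sub>E J A \<inter> space (PiM J (\<lambda>_. Z)))"
      by (intro emeasure_distr G sets_PiM_I_finite J A)
    also have "G -` Pi\<^sub>E J A \<inter> space (PiM J (\<lambda>_. Z))
        = Pi\<^sub>E J (\<lambda>j. (\<lambda>z. \<mu> j + s j * z) -` A j \<inter> space Z)"
      by (auto simp: G_def space_PiM PiE_def Pi_def extensional_def Z_def)
    also have "emeasure (PiM J (\<lambda>_. Z)) \<dots> = (\<Prod>j\<in>J. emeasure Z ((\<lambda>z. \<mu> j + s j * z) -` A j \<inter> space Z))"
      using pre by (intro Z.emeasure_PiM J) (auto simp: Z_def)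
    also have "\<dots> = (\<Prod>j\<in>J. emeasure (distr Z lborel (\<lambda>z. \<mu> j + s j * z)) (A j))"
      using A by (intro prod.cong refl emeasure_distr[symmetric]) (auto simp: Z_def)
    also have "\<dots> = (\<Prod>j\<in>J. emeasure (N j) (A j))"
      unfolding Z_def N_def using distr_std_normal_affine[OF s] by simp
    finally show "emeasure (distr (PiM J (\<lambda>_. Z)) (PiM J (\<lambda>_. borel)) G) (Pi\<^sub>E J A)
        = (\<Prod>j\<in>J. emeasure (N j) (A j))" .
  qed
  then show ?thesis unfolding N_def Z_def G_def by simp
qed

text \<open>Writing the Gaussian product as an affine image of a fixed standard Gaussian product
  turns the parameter dependence into a section of one product-measurable set.\<close>
lemma measurable_measure_PiM_normal:
  fixes \<mu> :: "'a \<Rightarrow> 'i \<Rightarrow> real" and s :: "'i \<Rightarrow> real"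
  assumes J: "finite J" and s: "\<And>j. 0 < s j" and A: "A \<in> sets (PiM J (\<lambda>_. borel))"
    and [measurable]: "\<And>j. (\<lambda>y. \<mu> y j) \<in> borel_measurable N"
  shows "(\<lambda>y. measure (PiM J (\<lambda>j. density lborel (normal_density (\<mu> y j) (s j)))) A) \<in> borel_measurable N"
proof -
  define Z where "Z = PiM J (\<lambda>_. density lborel std_normal_density)"
  interpret Z: prob_space Z unfolding Z_def
    by (intro prob_space_PiM prob_space_normal_density) auto
  define G where "G y z = (\<lambda>j\<in>J. \<mu> y j + s j * z j)" for y z
  have G: "(\<lambda>p. G (fst p) (snd p)) \<in> measurable (N \<Otimes>\<^sub>M Z) (PiM J (\<lambda>_. borel))"
    unfolding G_def Z_def by (intro measurable_restrict) measurable
  define Q where "Q = (\<lambda>p. G (fst p) (snd p)) -` A \<inter> space (N \<Otimes>\<^sub>M Z)"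
  have Q: "Q \<in> sets (N \<Otimes>\<^sub>M Z)" unfolding Q_def using G A by (rule measurable_sets)
  have eq: "measure (PiM J (\<lambda>j. density lborel (normal_density (\<mu> y j) (s j)))) A
      = enn2real (emeasure Z (Pair y -` Q))" if y: "y \<in> space N" for y
  proof -
    have Gy: "G y \<in> measurable Z (PiM J (\<lambda>_. borel))"
      using measurable_Pair2[OF G y] by simp
    have "measure (PiM J (\<lambda>j. density lborel (normal_density (\<mu> y j) (s j)))) A
       = measure (distr Z (PiM J (\<lambda>_. borel)) (G y)) A"
      unfolding Z_def G_def by (subst PiM_normal_eq_distr_affine[OF J s]) simp
    also have "\<dots> = measure Z (G y -` A \<inter> space Z)"
      by (rule measure_distr[OF Gy A])
    also have "G y -` A \<inter> space Z = Pair y -` Q"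
      using y by (auto simp: Q_def space_pair_measure)
    finally show ?thesis by (simp add: measure_def)
  qed
  have "(\<lambda>y. enn2real (emeasure Z (Pair y -` Q))) \<in> borel_measurable N"
    using Z.measurable_emeasure_Pair[OF Q] by measurable
  then show ?thesis by (rule measurable_cong[THEN iffD1, rotated]) (simp add: eq)
qed

section \<open>Point-mass tails of product measures\<close>

lemma sqnorm_eq_sum_plus_tail:
  fixes v c \<theta> :: "nat \<Rightarrow> real"
  assumes summable: "summable (\<lambda>j. (c (Suc j) - \<theta> (Suc j))\<^sup>2)"
    and tail: "\<And>j. m < j \<Longrightarrow> v j = c j"
  shows "sqnorm (\<lambda>j. v j - \<theta> j) = (\<Sum>j=1..m. (v j - \<theta> j)\<^sup>2) + (\<Sum>n. (c (Suc (n+m)) - \<theta> (Suc (n+m)))\<^sup>2)"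
proof -
  define f where "f j = (v (Suc j) - \<theta> (Suc j))\<^sup>2" for j
  have "eventually (\<lambda>j. f j = (c (Suc j) - \<theta> (Suc j))\<^sup>2) sequentially"
    unfolding f_def eventually_sequentially by (intro exI[of _ m]) (auto simp: tail)
  then have "summable f" using summable by (simp add: summable_cong)
  then have "sqnorm (\<lambda>j. v j - \<theta> j) = (\<Sum>n. f (n + m)) + (\<Sum>i<m. f i)"
    unfolding sqnorm_def f_def[symmetric] by (rule suminf_split_initial_segment)
  also have "(\<Sum>n. f (n + m)) = (\<Sum>n. (c (Suc (n+m)) - \<theta> (Suc (n+m)))\<^sup>2)"
    unfolding f_def by (simp add: tail)
  also have "(\<Sum>i<m. f i) = (\<Sum>j=1..m. (v j - \<theta> j)\<^sup>2)"
    unfolding f_def by (rule sum_bounds_lt_plus1)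
  finally show ?thesis by simp
qed

lemma measure_PiM_sqnorm_band_eq:
  fixes P :: "nat \<Rightarrow> real measure" and c \<theta> :: "nat \<Rightarrow> real"
  assumes P_prob: "\<And>j. prob_space (P j)" and P_sets: "\<And>j. sets (P j) = sets borel"
    and P_tail: "\<And>j. j \<notin> {1..m} \<Longrightarrow> P j = return borel (c j)"
    and summable: "summable (\<lambda>j. (c (Suc j) - \<theta> (Suc j))\<^sup>2)"
    and T: "T = (\<Sum>n. (c (Suc (n+m)) - \<theta> (Suc (n+m)))\<^sup>2)"
  shows "measure (PiM UNIV P)
      {v \<in> space (PiM UNIV P). lo \<le> sqnorm (\<lambda>j. v j - \<theta> j) \<and> sqnorm (\<lambda>j. v j - \<theta> j) \<le> hi}
    = measure (PiM UNIV P) {v \<in> space (PiM UNIV P).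
      lo \<le> (\<Sum>j=1..m. (v j - \<theta> j)\<^sup>2) + T \<and> (\<Sum>j=1..m. (v j - \<theta> j)\<^sup>2) + T \<le> hi}"
proof -
  interpret product_prob_space P UNIV by (simp add: P_prob product_prob_spaceI)
  have [measurable]: "(\<lambda>v. v j) \<in> borel_measurable (PiM UNIV P)" for j
    using measurable_component_singleton[of j UNIV P] measurable_cong_sets[OF refl P_sets] by blast
  have "AE v in PiM UNIV P. v j = c j" if "j \<notin> {1..m}" for j
  proof (rule AE_component)
    show "AE x in P j. x = c j" unfolding P_tail[OF that] by (subst AE_return) auto
  qed simp
  then have "AE v in PiM UNIV P. \<forall>j. j \<notin> {1..m} \<longrightarrow> v j = c j"
    by (auto simp: AE_all_countable)
  then have "AE v in PiM UNIV P.
      (v \<in> {v \<in> space (PiM UNIV P). lo \<le> sqnorm (\<lambda>j. v j - \<theta> j) \<and> sqnorm (\<lambda>j. v j - \<theta> j) \<le> hi}) =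
      (v \<in> {v \<in> space (PiM UNIV P).
        lo \<le> (\<Sum>j=1..m. (v j - \<theta> j)\<^sup>2) + T \<and> (\<Sum>j=1..m. (v j - \<theta> j)\<^sup>2) + T \<le> hi})"
  proof eventually_elim
    case (elim v)
    then have "sqnorm (\<lambda>j. v j - \<theta> j) = (\<Sum>j=1..m. (v j - \<theta> j)\<^sup>2) + T"
      unfolding T by (intro sqnorm_eq_sum_plus_tail[OF summable]) auto
    then show ?case by simp
  qed
  then show ?thesis by (rule measure_eq_AE) (unfold sqnorm_def, measurable)+
qed

lemma measure_PiM_restrict:
  fixes P :: "'i \<Rightarrow> 'a measure"
  assumes "\<And>i. prob_space (P i)" and "finite J" and "A \<in> sets (PiM J P)"
  shows "measure (PiM UNIV P) {v \<in> space (PiM UNIV P). restrict v J \<in> A} = measure (PiM J P) A"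
proof -
  interpret product_prob_space P UNIV by (simp add: assms(1) product_prob_spaceI)
  have "{v \<in> space (PiM UNIV P). restrict v J \<in> A} = prod_emb UNIV P J A"
    by (auto simp: prod_emb_def space_PiM)
  then show ?thesis
    unfolding measure_def using assms by (simp add: emeasure_PiM_emb')
qed

section \<open>Posterior variance and mean\<close>

context
  fixes lam eta :: "nat \<Rightarrow> real" and tau :: "real \<Rightarrow> nat \<Rightarrow> real" and eps :: real and j :: nat
  assumes eps_pos: "0 < eps" and lam_nz: "lam j \<noteq> 0" and tau_pos: "0 < tau eps j"
begin

lemma post_var_eq: "post_var lam tau eps j = 1 / (1 / (eps * Lam lam j) + 1 / tau eps j)"
  by (simp add: post_var_def Lam_def)

lemma post_var_pos: "0 < post_var lam tau eps j"
  using eps_pos lam_nz tau_pos by (simp add: post_var_def add_pos_pos)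

lemma post_var_le_eps_Lam: "post_var lam tau eps j \<le> eps * Lam lam j"
proof -
  have v: "0 < eps * Lam lam j" using eps_pos lam_nz by (simp add: Lam_def)
  have "1 / (1 / (eps * Lam lam j) + 1 / tau eps j) \<le> 1 / (1 / (eps * Lam lam j))"
    using v tau_pos by (intro divide_left_mono) (auto intro!: add_pos_pos divide_pos_pos)
  then show ?thesis unfolding post_var_eq by simp
qed

lemma post_var_ge:
  assumes d: "0 < d" and tau_ge: "d * (eps * Lam lam j) \<le> tau eps j"
  shows "d / (1 + d) * (eps * Lam lam j) \<le> post_var lam tau eps j"
proof -
  define v where "v = eps * Lam lam j"
  have v: "0 < v" using eps_pos lam_nz by (simp add: v_def Lam_def)
  have "1 / tau eps j \<le> 1 / (d * v)"
    using tau_ge d v tau_pos by (intro divide_left_mono) (auto simp: v_def)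
  then have "1 / v + 1 / tau eps j \<le> 1 / v + 1 / (d * v)" by simp
  also have "\<dots> = (1 + d) / (d * v)" using d v by (simp add: field_simps)
  finally have "1 / v + 1 / tau eps j \<le> (1 + d) / (d * v)" .
  then have "1 / ((1 + d) / (d * v)) \<le> 1 / (1 / v + 1 / tau eps j)"
    using d v tau_pos by (intro divide_left_mono) (auto intro!: add_pos_pos divide_pos_pos mult_pos_pos)
  moreover have "1 / ((1 + d) / (d * v)) = d / (1 + d) * v"
    using d v by simp
  ultimately show ?thesis
    unfolding post_var_eq v_def[symmetric] by simp
qed

lemma post_var_div_tau_sq_le:
  assumes d: "0 < d" and tau_ge: "d * (sqrt eps * sqrt (Lam lam j)) \<le> tau eps j"
  shows "(post_var lam tau eps j / tau eps j)\<^sup>2 \<le> eps * Lam lam j / d\<^sup>2"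
proof -
  define q where "q = sqrt eps * sqrt (Lam lam j)"
  have q: "0 < q" "q\<^sup>2 = eps * Lam lam j"
    using eps_pos lam_nz by (auto simp: q_def Lam_def power_mult_distrib)
  have "post_var lam tau eps j / tau eps j \<le> q\<^sup>2 / (d * q)"
    using post_var_le_eps_Lam post_var_pos tau_ge q d
    by (intro frac_le) (auto simp: q_def[symmetric])
  also have "\<dots> = q / d" using q(1) d by (simp add: power2_eq_square)
  finally have "(post_var lam tau eps j / tau eps j)\<^sup>2 \<le> (q / d)\<^sup>2"
    using post_var_pos tau_pos by (intro power_mono) auto
  then show ?thesis using q by (simp add: power_divide)
qed

lemma post_mean_minus_eq:
  "post_mean lam eta tau eps Y j - \<theta> j =
    post_var lam tau eps j * lam j / eps * (Y j - lam j * \<theta> j)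
    + post_var lam tau eps j * (eta j - \<theta> j) / tau eps j"
proof -
  define \<sigma> where "\<sigma> = post_var lam tau eps j"
  have "0 < (lam j)\<^sup>2 / eps + 1 / tau eps j"
    using eps_pos lam_nz tau_pos by (simp add: add_pos_pos)
  then have "\<sigma> * ((lam j)\<^sup>2 / eps + 1 / tau eps j) = 1"
    by (simp add: \<sigma>_def post_var_def)
  then have "\<sigma> * (lam j)\<^sup>2 / eps + \<sigma> / tau eps j = 1"
    by (simp add: distrib_left)
  then have "\<sigma> * (eta j / tau eps j + lam j * Y j / eps) - \<theta> j
      = \<sigma> * (eta j / tau eps j + lam j * Y j / eps) - \<theta> j * (\<sigma> * (lam j)\<^sup>2 / eps + \<sigma> / tau eps j)"
    by simp
  also have "\<dots> = \<sigma> * lam j / eps * (Y j - lam j * \<theta> j) + \<sigma> * (eta j - \<theta> j) / tau eps j"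
    by (simp add: algebra_simps power2_eq_square diff_divide_distrib add_divide_distrib)
  finally show ?thesis unfolding post_mean_def \<sigma>_def .
qed

lemma post_var_noise_le: "(post_var lam tau eps j * lam j / eps * sqrt eps)\<^sup>2 \<le> post_var lam tau eps j"
proof -
  have "(post_var lam tau eps j * lam j / eps * sqrt eps)\<^sup>2
      = post_var lam tau eps j * (post_var lam tau eps j / (eps * Lam lam j))"
    using eps_pos lam_nz by (simp add: Lam_def power_mult_distrib power_divide field_simps power2_eq_square)
  also have "\<dots> \<le> post_var lam tau eps j * 1"
  proof (intro mult_left_mono)
    have "0 < eps * Lam lam j" using eps_pos lam_nz by (simp add: Lam_def)
    then show "post_var lam tau eps j / (eps * Lam lam j) \<le> 1"
      using post_var_le_eps_Lam by simp
  qed (use post_var_pos in simp)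
  finally show ?thesis by simp
qed

end

section \<open>The minimax rate\<close>

locale minimax_rate =
  fixes lam a :: "nat \<Rightarrow> real" and B :: real
  assumes lam_bound: "\<And>j. 1 \<le> j \<Longrightarrow> \<bar>lam j\<bar> \<le> B"
    and lam_nonzero: "\<And>j. 1 \<le> j \<Longrightarrow> lam j \<noteq> 0"
    and a_pos: "\<And>j. 1 \<le> j \<Longrightarrow> 0 < a j"
    and a_antimono: "\<And>j k. 1 \<le> j \<Longrightarrow> j \<le> k \<Longrightarrow> a k \<le> a j"
    and a_one: "a 1 = 1"
    and a_tendsto_0: "a \<longlonglongrightarrow> 0"
begin

lemma B_pos: "0 < B"
  using lam_bound[of 1] lam_nonzero[of 1] by linarith

lemma Lam_pos: "1 \<le> j \<Longrightarrow> 0 < Lam lam j"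
  using lam_nonzero unfolding Lam_def by simp

lemma Lam_ge: "1 \<le> j \<Longrightarrow> 1 / B\<^sup>2 \<le> Lam lam j"
  using lam_bound[of j] lam_nonzero[of j] B_pos unfolding Lam_def
  by (intro divide_left_mono) (auto simp: abs_le_square_iff[symmetric])

lemma Lam_le_Lam_max: "1 \<le> j \<Longrightarrow> j \<le> m \<Longrightarrow> Lam lam j \<le> Lam_max lam m"
  unfolding Lam_max_def by (intro Max_ge) auto

lemma mult_Lam_bar: "real k * Lam_bar lam k = (\<Sum>j=1..k. Lam lam j)"
  by (cases "k = 0") (simp_all add: Lam_bar_def)

lemma Lam_bar_nonneg: "0 \<le> Lam_bar lam k"
  unfolding Lam_bar_def
  by (intro divide_nonneg_nonneg sum_nonneg) (use Lam_pos in \<open>auto intro: less_imp_le\<close>)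

lemma rate_ge_linear: "0 < eps \<Longrightarrow> 1 \<le> k \<Longrightarrow> eps * real k / B\<^sup>2 \<le> rate a lam eps k"
proof -
  assume eps: "0 < eps" and k: "1 \<le> k"
  have "real k / B\<^sup>2 = (\<Sum>j=1..k. 1 / B\<^sup>2)" by simp
  also have "\<dots> \<le> real k * Lam_bar lam k"
    unfolding mult_Lam_bar by (intro sum_mono Lam_ge) simp
  finally have "eps * (real k / B\<^sup>2) \<le> eps * (real k * Lam_bar lam k)"
    using eps by (intro mult_left_mono) auto
  then show ?thesis unfolding rate_def by (simp add: mult.assoc)
qed

text \<open>The rate grows at least linearly in the dimension, so its infimum over all dimensions is
  attained among finitely many and the \<open>LEAST\<close> in \<open>m_star\<close> is well defined.\<close>
lemma m_star_minimizes:
  assumes eps: "0 < eps"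
  shows "1 \<le> m_star a lam eps \<and> (\<forall>k\<ge>1. rate a lam eps (m_star a lam eps) \<le> rate a lam eps k)"
proof -
  define N where "N = nat \<lceil>rate a lam eps 1 * B\<^sup>2 / eps\<rceil> + 1"
  have fin: "finite (rate a lam eps ` {1..N})" "rate a lam eps ` {1..N} \<noteq> {}"
    unfolding N_def by auto
  then obtain m0 where m0: "m0 \<in> {1..N}" "rate a lam eps m0 = Min (rate a lam eps ` {1..N})"
    by (metis Min_in imageE)
  have m0_min: "rate a lam eps m0 \<le> rate a lam eps k" if "k \<in> {1..N}" for k
    using fin that by (simp add: m0(2))
  have "rate a lam eps m0 \<le> rate a lam eps k" if k: "1 \<le> k" for k
  proof (cases "k \<le> N")
    case True then show ?thesis using m0_min k by simp
  next
    case False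
    have "rate a lam eps 1 * B\<^sup>2 / eps \<le> real N" unfolding N_def by linarith
    then have "rate a lam eps 1 \<le> eps * real N / B\<^sup>2" using eps B_pos by (simp add: field_simps)
    also have "\<dots> \<le> eps * real k / B\<^sup>2"
      using False eps by (intro divide_right_mono mult_left_mono) auto
    also have "\<dots> \<le> rate a lam eps k" by (rule rate_ge_linear[OF eps k])
    finally show ?thesis using m0_min[of 1] N_def by fastforce
  qed
  then have "\<exists>m. 1 \<le> m \<and> (\<forall>k\<ge>1. rate a lam eps m \<le> rate a lam eps k)"
    using m0(1) by auto
  then show ?thesis unfolding m_star_def by (rule LeastI_ex)
qed

lemma m_star_ge_1: "0 < eps \<Longrightarrow> 1 \<le> m_star a lam eps"
  using m_star_minimizes by blast

lemma Phi_star_le_rate: "0 < eps \<Longrightarrow> 1 \<le> k \<Longrightarrow> Phi_star a lam eps \<le> rate a lam eps k"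
  unfolding Phi_star_def using m_star_minimizes by blast

lemma a_m_star_le_Phi_star: "a (m_star a lam eps) \<le> Phi_star a lam eps"
  unfolding Phi_star_def rate_def by simp

lemma variance_term_le_Phi_star:
  "eps * real (m_star a lam eps) * Lam_bar lam (m_star a lam eps) \<le> Phi_star a lam eps"
  unfolding Phi_star_def rate_def by simp

lemma Phi_star_pos: "0 < eps \<Longrightarrow> 0 < Phi_star a lam eps"
  using a_m_star_le_Phi_star[of eps] a_pos[OF m_star_ge_1] by fastforce

lemma tendsto_Phi_star: "(Phi_star a lam \<longlongrightarrow> 0) (at_right 0)"
proof (rule tendstoI)
  fix e :: real assume e: "0 < e"
  obtain n0 where n0: "\<And>n. n \<ge> n0 \<Longrightarrow> \<bar>a n\<bar> < e"
    using a_tendsto_0 e by (auto simp: lim_sequentially dist_real_def)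
  define k where "k = max n0 1"
  have k: "1 \<le> k" "a k < e" using n0[of k] by (auto simp: k_def)
  define c where "c = real k * Lam_bar lam k"
  have c: "0 \<le> c" unfolding c_def using Lam_bar_nonneg by simp
  have "eventually (\<lambda>eps. eps \<in> {0<..<e / (c + 1)}) (at_right (0::real))"
    using e k c by (intro eventually_at_right_real) auto
  then show "eventually (\<lambda>eps. dist (Phi_star a lam eps) 0 < e) (at_right 0)"
  proof eventually_elim
    case (elim eps)
    then have "eps * c \<le> eps * (c + 1)" by auto
    also have "\<dots> < e" using elim c by (simp add: field_simps)
    finally have "rate a lam eps k < e" using k unfolding rate_def c_def by (auto simp: mult.assoc)
    then show ?case
      using Phi_star_le_rate[of eps k] Phi_star_pos[of eps] elim k by (simp add: dist_real_def)
  qed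
qed

text \<open>\<open>a\<close> is positive and antitone while \<open>a (m_star) \<le> Phi_star \<longlonglongrightarrow> 0\<close>.\<close>
lemma filterlim_m_star: "filterlim (m_star a lam) at_top (at_right 0)"
  unfolding filterlim_at_top
proof
  fix N :: nat
  have "0 < a (max N 1)" using a_pos by simp
  from order_tendstoD(2)[OF tendsto_Phi_star this]
  have "eventually (\<lambda>eps. 0 < eps \<and> Phi_star a lam eps < a (max N 1)) (at_right 0)"
    by (simp add: eventually_conj_iff eventually_at_right_less)
  then show "eventually (\<lambda>eps. N \<le> m_star a lam eps) (at_right 0)"
  proof eventually_elim
    case (elim eps)
    show ?case
    proof (rule ccontr)
      assume "\<not> N \<le> m_star a lam eps"
      then have "a (max N 1) \<le> a (m_star a lam eps)"
        using a_antimono m_star_ge_1 elim by auto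
      then show False using a_m_star_le_Phi_star[of eps] elim by linarith
    qed
  qed
qed

lemma kappa_star_le:
  assumes eps: "0 < eps" "eps < eps_o"
  shows "kappa_star a lam eps_o \<le> min (a (m_star a lam eps))
      (eps * real (m_star a lam eps) * Lam_bar lam (m_star a lam eps)) / Phi_star a lam eps"
  unfolding kappa_star_def
proof (rule cINF_lower)
  show "bdd_below ((\<lambda>eps. min (a (m_star a lam eps))
      (eps * real (m_star a lam eps) * Lam_bar lam (m_star a lam eps)) / Phi_star a lam eps) ` {0<..<eps_o})"
    using a_pos[OF m_star_ge_1] Phi_star_pos Lam_bar_nonneg
    by (intro bdd_belowI2[of _ 0] divide_nonneg_nonneg) (auto intro: less_imp_le)
qed (use eps in auto)

lemma kappa_star_mult_Phi_star_le:
  assumes "0 < eps" "eps < eps_o"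
  shows "kappa_star a lam eps_o * Phi_star a lam eps \<le> eps * real (m_star a lam eps) * Lam_bar lam (m_star a lam eps)"
  using mult_right_mono[OF kappa_star_le[OF assms], of "Phi_star a lam eps"] Phi_star_pos[OF assms(1)]
  by (simp add: less_imp_le)

lemma kappa_star_le_1:
  assumes "0 < eps_o"
  shows "kappa_star a lam eps_o \<le> 1"
proof -
  define e where "e = eps_o / 2"
  have e: "0 < e" "e < eps_o" using assms by (auto simp: e_def)
  have "min (a (m_star a lam e)) (e * real (m_star a lam e) * Lam_bar lam (m_star a lam e))
      \<le> Phi_star a lam e"
    unfolding Phi_star_def rate_def by simp
  then have "min (a (m_star a lam e)) (e * real (m_star a lam e) * Lam_bar lam (m_star a lam e))
      / Phi_star a lam e \<le> 1"
    using Phi_star_pos[OF e(1)] by simp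
  then show ?thesis using kappa_star_le[OF e] by linarith
qed

lemma a_le_1: "1 \<le> j \<Longrightarrow> a j \<le> 1"
  using a_antimono[of 1 j] a_one by simp

lemma ellipsoid_summable:
  assumes "\<theta> \<in> ellipsoid a eta r"
  shows "summable (\<lambda>j. (eta (Suc j) - \<theta> (Suc j))\<^sup>2)"
proof (rule summable_comparison_test')
  show "summable (\<lambda>j. (\<theta> (Suc j) - eta (Suc j))\<^sup>2 / a (Suc j))"
    using assms by (simp add: ellipsoid_def)
  show "norm ((eta (Suc j) - \<theta> (Suc j))\<^sup>2) \<le> (\<theta> (Suc j) - eta (Suc j))\<^sup>2 / a (Suc j)" for j
    using a_pos[of "Suc j"] a_le_1[of "Suc j"]
    by (simp add: power2_commute le_divide_eq mult_left_le)
qed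

text \<open>The ellipsoid weights \<open>1 / a\<^sub>j \<ge> 1\<close> make the first coordinates cost at most \<open>r\<close>,
  and, \<open>a\<close> being antitone, the tail beyond \<open>m\<close> at most \<open>r a\<^sub>m\<close>.\<close>
lemma ellipsoid_head_le:
  assumes "\<theta> \<in> ellipsoid a eta r"
  shows "(\<Sum>j=1..m. (\<theta> j - eta j)\<^sup>2) \<le> r"
proof -
  define g where "g = (\<lambda>j. (\<theta> (Suc j) - eta (Suc j))\<^sup>2 / a (Suc j))"
  have g: "summable g" "suminf g \<le> r" "\<And>j. 0 \<le> g j"
    using assms a_pos[of "Suc _"] by (auto simp: ellipsoid_def g_def less_imp_le)
  have "(\<Sum>j=1..m. (\<theta> j - eta j)\<^sup>2) = (\<Sum>j<m. (\<theta> (Suc j) - eta (Suc j))\<^sup>2)"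
    by (rule sum_bounds_lt_plus1[symmetric])
  also have "\<dots> \<le> (\<Sum>j<m. g j)"
    using a_pos a_le_1 by (intro sum_mono) (simp add: g_def le_divide_eq mult_left_le)
  also have "\<dots> \<le> suminf g" using g by (intro sum_le_suminf) auto
  finally show ?thesis using g by linarith
qed

lemma ellipsoid_tail_le:
  assumes "\<theta> \<in> ellipsoid a eta r" and m: "1 \<le> m"
  shows "(\<Sum>n. (eta (Suc (n+m)) - \<theta> (Suc (n+m)))\<^sup>2) \<le> r * a m"
proof -
  define g where "g = (\<lambda>j. (\<theta> (Suc j) - eta (Suc j))\<^sup>2 / a (Suc j))"
  have g: "summable g" "suminf g \<le> r" "\<And>j. 0 \<le> g j"
    using assms a_pos[of "Suc _"] by (auto simp: ellipsoid_def g_def less_imp_le)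
  have "(\<Sum>n. (eta (Suc (n+m)) - \<theta> (Suc (n+m)))\<^sup>2) \<le> (\<Sum>n. a m * g (n + m))"
  proof (rule suminf_le)
    show "(eta (Suc (n+m)) - \<theta> (Suc (n+m)))\<^sup>2 \<le> a m * g (n + m)" for n
      using a_pos[of "Suc (n+m)"] a_antimono[of m "Suc (n+m)"] m g(3)[of "n+m"]
      by (simp add: g_def power2_commute field_simps mult_right_mono)
    show "summable (\<lambda>n. (eta (Suc (n+m)) - \<theta> (Suc (n+m)))\<^sup>2)"
      using ellipsoid_summable[OF assms(1)]
        summable_iff_shift[where k=m and f="\<lambda>j. (eta (Suc j) - \<theta> (Suc j))\<^sup>2"] by simp
    show "summable (\<lambda>n. a m * g (n + m))" using g by (intro summable_mult) simp
  qed
  also have "\<dots> = a m * (\<Sum>n. g (n + m))" using g by (intro suminf_mult) simp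
  also have "\<dots> \<le> a m * r"
  proof -
    have "(\<Sum>n. g (n + m)) \<le> suminf g"
      using suminf_split_initial_segment[OF g(1), of m] g(3) by (simp add: sum_nonneg)
    then show ?thesis using g a_pos[OF m] by (intro mult_left_mono) auto
  qed
  finally show ?thesis by (simp add: mult.commute)
qed

end

section \<open>Posterior contraction\<close>

locale sieve_posterior = minimax_rate +
  fixes eta :: "nat \<Rightarrow> real" and tau :: "real \<Rightarrow> nat \<Rightarrow> real" and d r L eps_o :: real
  assumes tau_pos: "\<And>eps j. 0 < eps \<Longrightarrow> eps < 1 \<Longrightarrow> 1 \<le> j \<Longrightarrow> 0 < tau eps j"
    and eps_o: "0 < eps_o" "eps_o < 1"
    and d_pos: "0 < d"
    and tau_ge: "\<And>eps j. 0 < eps \<Longrightarrow> eps < 1 \<Longrightarrow> 1 \<le> j \<Longrightarrow> j \<le> G_eps lam eps \<Longrightarrow>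
       d * max (sqrt eps * sqrt (Lam lam j)) (eps * Lam lam j) \<le> tau eps j"
    and kappa_star_pos: "0 < kappa_star a lam eps_o"
    and r_pos: "0 < r"
    and L_ge_1: "1 \<le> L"
    and L_bound: "\<And>eps. 0 < eps \<Longrightarrow> eps < eps_o \<Longrightarrow>
       eps * real (m_star a lam eps) * Lam_max lam (m_star a lam eps) / Phi_star a lam eps \<le> L"
begin

abbreviation \<kappa> where "\<kappa> \<equiv> kappa_star a lam eps_o"

definition K :: real where "K = 10 * max (1 + 1 / d) (r / d\<^sup>2) * max 1 r * (L / \<kappa>)"

lemma eps_Lam_max_le:
  assumes "0 < eps" "eps < eps_o"
  shows "eps * Lam_max lam (m_star a lam eps) \<le> L * Phi_star a lam eps / real (m_star a lam eps)"
  using L_bound[OF assms] Phi_star_pos[OF assms(1)] m_star_ge_1[OF assms(1)]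
  by (simp add: field_simps)

text \<open>Assumption A is only available up to \<open>G_eps\<close>; for small \<open>eps\<close> the optimal dimension
  lies below it, because \<open>eps m Lam_max m\<close> and \<open>eps m\<close> are both \<open>O(Phi_star)\<close>.\<close>
lemma m_star_le_G_eps:
  assumes eps: "0 < eps" "eps < eps_o"
    and small: "L * Phi_star a lam eps \<le> Lam lam 1" "B\<^sup>2 * Phi_star a lam eps \<le> 1"
  shows "m_star a lam eps \<le> G_eps lam eps"
proof -
  let ?m = "m_star a lam eps"
  have m: "1 \<le> ?m" using m_star_ge_1[OF eps(1)] .
  have "eps * Lam_max lam ?m \<le> L * Phi_star a lam eps / real ?m"
    by (rule eps_Lam_max_le[OF eps])
  also have "\<dots> \<le> L * Phi_star a lam eps"
    using divide_left_mono[of 1 "real ?m" "L * Phi_star a lam eps"] m L_ge_1 Phi_star_pos[OF eps(1)]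
    by simp
  finally have A: "eps * Lam_max lam ?m \<le> Lam lam 1" using small(1) by linarith
  have "eps * real ?m / B\<^sup>2 \<le> Phi_star a lam eps"
    using rate_ge_linear[OF eps(1) m] unfolding Phi_star_def .
  then have "eps * real ?m \<le> 1" using small(2) B_pos by (simp add: field_simps)
  then have "?m \<le> nat \<lfloor>1 / eps\<rfloor>" using eps by (simp add: le_nat_floor field_simps)
  then show ?thesis
    unfolding G_eps_def using m A by (intro Max_ge) auto
qed

text \<open>The small-\<open>eps\<close> regime: Assumption A covers every coordinate up to \<open>m_star\<close>, and \<open>m_star\<close>
  is large enough to absorb \<open>r L / d\<^sup>2\<close> in the bias bound.\<close>
definition admissible :: "real \<Rightarrow> bool" where
  "admissible eps \<longleftrightarrow> 0 < eps \<and> eps < eps_o \<and> m_star a lam eps \<le> G_eps lam eps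
     \<and> r * L \<le> d\<^sup>2 * real (m_star a lam eps)"

lemma eventually_admissible: "eventually admissible (at_right 0)"
proof -
  have "eventually (\<lambda>eps. 0 < eps \<and> eps < eps_o) (at_right (0::real))"
    using eventually_at_right_real[OF eps_o(1)] by (auto elim: eventually_mono)
  moreover have "eventually (\<lambda>eps. Phi_star a lam eps < Lam lam 1 / L) (at_right 0)"
    using order_tendstoD(2)[OF tendsto_Phi_star] Lam_pos[of 1] L_ge_1 by simp
  moreover have "eventually (\<lambda>eps. Phi_star a lam eps < 1 / B\<^sup>2) (at_right 0)"
    using order_tendstoD(2)[OF tendsto_Phi_star] B_pos by simp
  moreover have "eventually (\<lambda>eps. nat \<lceil>r * L / d\<^sup>2\<rceil> \<le> m_star a lam eps) (at_right 0)"
    using filterlim_m_star unfolding filterlim_at_top by blast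
  ultimately show ?thesis
  proof eventually_elim
    case (elim eps)
    then have "L * Phi_star a lam eps \<le> Lam lam 1" "B\<^sup>2 * Phi_star a lam eps \<le> 1"
      using L_ge_1 B_pos by (simp_all add: field_simps)
    moreover have "r * L / d\<^sup>2 \<le> real (m_star a lam eps)"
      using elim by (meson le_nat_iff of_nat_le_iff order_trans real_nat_ceiling_ge)
    ultimately show ?case
      using elim m_star_le_G_eps d_pos by (auto simp: admissible_def field_simps)
  qed
qed

lemma K_ge: "10 * max 1 r \<le> K"
  and K_ge_kappa: "10 * ((1 + d) / d) / \<kappa> \<le> K"
proof -
  have k: "1 \<le> L / \<kappa>"
    using L_ge_1 kappa_star_le_1[OF eps_o(1)] kappa_star_pos by (simp add: field_simps)
  have "1 \<le> max (1 + 1 / d) (r / d\<^sup>2)" using d_pos by (simp add: le_max_iff_disj)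
  then have "1 * max 1 r * 1 \<le> max (1 + 1 / d) (r / d\<^sup>2) * max 1 r * (L / \<kappa>)"
    using k by (intro mult_mono) auto
  then show "10 * max 1 r \<le> K" unfolding K_def by linarith
  have "(1 + d) / d / \<kappa> = (1 + 1 / d) * (1 / \<kappa>)" using d_pos by (simp add: field_simps)
  also have "\<dots> \<le> max (1 + 1 / d) (r / d\<^sup>2) * (L / \<kappa>)"
    using L_ge_1 kappa_star_pos d_pos by (intro mult_mono divide_right_mono) (auto simp: le_max_iff_disj)
  also have "\<dots> = max (1 + 1 / d) (r / d\<^sup>2) * 1 * (L / \<kappa>)" by simp
  also have "\<dots> \<le> max (1 + 1 / d) (r / d\<^sup>2) * max 1 r * (L / \<kappa>)"
    using k d_pos by (intro mult_right_mono mult_left_mono) (auto simp: le_max_iff_disj)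
  finally show "10 * ((1 + d) / d) / \<kappa> \<le> K" unfolding K_def by linarith
qed

lemma K_pos: "0 < K"
  using K_ge by (smt (verit) max.cobounded1)

lemma prob_space_posterior_component:
  assumes "0 < eps" "eps < 1"
  shows "prob_space (if 1 \<le> j \<and> j \<le> n
      then density lborel (normal_density (post_mean lam eta tau eps Y j) (sqrt (post_var lam tau eps j)))
      else return borel (eta j))"
proof (cases "1 \<le> j \<and> j \<le> n")
  case True
  then have "0 < post_var lam tau eps j"
    using post_var_pos[OF assms(1)] lam_nonzero[of j] tau_pos[OF assms, of j] by simp
  then show ?thesis using True by (simp add: prob_space_normal_density)
next
  case False
  then show ?thesis by (subst if_not_P) (simp_all add: prob_space_return)
qed

lemma prob_space_posterior:
  "0 < eps \<Longrightarrow> eps < 1 \<Longrightarrow> prob_space (posterior lam eta tau eps n Y)"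
  unfolding posterior_def by (intro prob_space_PiM prob_space_posterior_component)

lemma prob_space_data_law: "0 < eps \<Longrightarrow> prob_space (data_law lam eps \<theta>)"
  unfolding data_law_def by (intro prob_space_PiM prob_space_normal_density) auto

lemma measurable_posterior_band:
  assumes eps: "0 < eps" "eps < 1" and \<theta>: "\<theta> \<in> ellipsoid a eta r"
  shows "(\<lambda>Y. measure (posterior lam eta tau eps n Y) {v \<in> space (posterior lam eta tau eps n Y).
      lo \<le> sqnorm (\<lambda>j. v j - \<theta> j) \<and> sqnorm (\<lambda>j. v j - \<theta> j) \<le> hi})
    \<in> borel_measurable (data_law lam eps \<theta>)"
proof -
  define J where "J = {1..n}"
  define s where "s j = (if j \<in> J then sqrt (post_var lam tau eps j) else 1)" for j
  define P where "P Y j = (if 1 \<le> j \<and> j \<le> n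
      then density lborel (normal_density (post_mean lam eta tau eps Y j) (sqrt (post_var lam tau eps j)))
      else return borel (eta j))" for Y j
  define T where "T = (\<Sum>k. (eta (Suc (k+n)) - \<theta> (Suc (k+n)))\<^sup>2)"
  define A where "A = {x \<in> space (PiM J (\<lambda>_. borel)).
      lo \<le> (\<Sum>j\<in>J. (x j - \<theta> j)\<^sup>2) + T \<and> (\<Sum>j\<in>J. (x j - \<theta> j)\<^sup>2) + T \<le> hi}"
  have P_prob: "prob_space (P Y j)" for Y j
    unfolding P_def by (rule prob_space_posterior_component[OF eps])
  have s_pos: "0 < s j" for j
    using post_var_pos[OF eps(1)] lam_nonzero tau_pos[OF eps] by (simp add: s_def J_def)
  have A: "A \<in> sets (PiM J (\<lambda>_. borel))" unfolding A_def by measurable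
  have "measure (posterior lam eta tau eps n Y) {v \<in> space (posterior lam eta tau eps n Y).
      lo \<le> sqnorm (\<lambda>j. v j - \<theta> j) \<and> sqnorm (\<lambda>j. v j - \<theta> j) \<le> hi}
    = measure (PiM J (\<lambda>j. density lborel (normal_density (post_mean lam eta tau eps Y j) (s j)))) A"
    for Y
  proof -
    have "measure (posterior lam eta tau eps n Y) {v \<in> space (posterior lam eta tau eps n Y).
        lo \<le> sqnorm (\<lambda>j. v j - \<theta> j) \<and> sqnorm (\<lambda>j. v j - \<theta> j) \<le> hi}
      = measure (PiM UNIV (P Y)) {v \<in> space (PiM UNIV (P Y)).
        lo \<le> (\<Sum>j=1..n. (v j - \<theta> j)\<^sup>2) + T \<and> (\<Sum>j=1..n. (v j - \<theta> j)\<^sup>2) + T \<le> hi}"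
      unfolding posterior_def P_def[symmetric]
      by (rule measure_PiM_sqnorm_band_eq[OF P_prob _ _ ellipsoid_summable[OF \<theta>] T_def])
        (auto simp: P_def)
    also have "{v \<in> space (PiM UNIV (P Y)).
        lo \<le> (\<Sum>j=1..n. (v j - \<theta> j)\<^sup>2) + T \<and> (\<Sum>j=1..n. (v j - \<theta> j)\<^sup>2) + T \<le> hi}
      = {v \<in> space (PiM UNIV (P Y)). restrict v J \<in> A}"
      by (auto simp: A_def J_def space_PiM P_def)
    also have "measure (PiM UNIV (P Y)) \<dots> = measure (PiM J (P Y)) A"
    proof (rule measure_PiM_restrict[OF P_prob])
      have "sets (PiM J (P Y)) = sets (PiM J (\<lambda>_. borel))"
        by (intro sets_PiM_cong) (auto simp: P_def)
      then show "A \<in> sets (PiM J (P Y))" using A by simp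
    qed (simp add: J_def)
    also have "PiM J (P Y) = PiM J (\<lambda>j. density lborel (normal_density (post_mean lam eta tau eps Y j) (s j)))"
      by (intro PiM_cong) (auto simp: P_def s_def J_def)
    finally show ?thesis .
  qed
  moreover have "(\<lambda>Y. measure (PiM J (\<lambda>j. density lborel (normal_density (post_mean lam eta tau eps Y j) (s j)))) A)
      \<in> borel_measurable (data_law lam eps \<theta>)"
  proof (rule measurable_measure_PiM_normal[OF _ s_pos A])
    have [measurable]: "(\<lambda>Y. Y j) \<in> borel_measurable (data_law lam eps \<theta>)" for j
      unfolding data_law_def using measurable_component_singleton[of j UNIV] by simp
    show "(\<lambda>Y. post_mean lam eta tau eps Y j) \<in> borel_measurable (data_law lam eps \<theta>)" for j
      unfolding post_mean_def by measurable
  qed (simp add: J_def)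
  ultimately show ?thesis by simp
qed

lemma integral_posterior_band_le_1:
  assumes eps: "0 < eps" "eps < 1" and \<theta>: "\<theta> \<in> ellipsoid a eta r"
  shows "integral\<^sup>L (data_law lam eps \<theta>) (\<lambda>Y. measure (posterior lam eta tau eps n Y)
      {v \<in> space (posterior lam eta tau eps n Y).
         lo \<le> sqnorm (\<lambda>j. v j - \<theta> j) \<and> sqnorm (\<lambda>j. v j - \<theta> j) \<le> hi}) \<le> 1"
proof -
  interpret D: prob_space "data_law lam eps \<theta>" by (rule prob_space_data_law[OF eps(1)])
  have le_1: "measure (posterior lam eta tau eps n Y) B \<le> 1" for Y B
    using prob_space.prob_le_1[OF prob_space_posterior[OF eps]] by auto
  show ?thesis
    using measurable_posterior_band[OF eps \<theta>] le_1
    by (intro D.integral_le_const D.integrable_const_bound[where B=1]) auto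
qed

context
  fixes eps :: real
  assumes admissible: "admissible eps"
begin

abbreviation m where "m \<equiv> m_star a lam eps"
abbreviation \<Phi> where "\<Phi> \<equiv> Phi_star a lam eps"
abbreviation \<sigma> where "\<sigma> j \<equiv> post_var lam tau eps j"

lemma eps_pos: "0 < eps" and eps_lt: "eps < eps_o" and eps_lt_1: "eps < 1"
  using admissible eps_o by (auto simp: admissible_def)

lemma m_ge_1: "1 \<le> m"
  using m_star_ge_1[OF eps_pos] .

lemma Phi_pos: "0 < \<Phi>"
  using Phi_star_pos[OF eps_pos] .

lemma tau_ge_max: "j \<in> {1..m} \<Longrightarrow> d * max (sqrt eps * sqrt (Lam lam j)) (eps * Lam lam j) \<le> tau eps j"
  using tau_ge[OF eps_pos eps_lt_1, of j] admissible by (auto simp: admissible_def)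

lemma post_var_bounds:
  assumes j: "j \<in> {1..m}"
  shows "0 < \<sigma> j" and "\<sigma> j \<le> eps * Lam lam j"
    and "d / (1 + d) * (eps * Lam lam j) \<le> \<sigma> j"
    and "(\<sigma> j / tau eps j)\<^sup>2 \<le> eps * Lam lam j / d\<^sup>2"
    and "(\<sigma> j * lam j / eps * sqrt eps)\<^sup>2 \<le> \<sigma> j"
proof -
  have lam: "lam j \<noteq> 0" and tau: "0 < tau eps j"
    using j lam_nonzero tau_pos[OF eps_pos eps_lt_1] by auto
  have "d * x \<le> tau eps j" if "x \<le> max (sqrt eps * sqrt (Lam lam j)) (eps * Lam lam j)" for x
    using mult_left_mono[OF that, of d] d_pos tau_ge_max[OF j] by linarith
  then have "d * (sqrt eps * sqrt (Lam lam j)) \<le> tau eps j" "d * (eps * Lam lam j) \<le> tau eps j"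
    by simp_all
  then show "0 < \<sigma> j" "\<sigma> j \<le> eps * Lam lam j"
    "d / (1 + d) * (eps * Lam lam j) \<le> \<sigma> j"
    "(\<sigma> j / tau eps j)\<^sup>2 \<le> eps * Lam lam j / d\<^sup>2"
    "(\<sigma> j * lam j / eps * sqrt eps)\<^sup>2 \<le> \<sigma> j"
    using post_var_pos post_var_le_eps_Lam post_var_ge post_var_div_tau_sq_le post_var_noise_le
      eps_pos lam tau d_pos by auto
qed

lemma eps_Lam_le: "j \<in> {1..m} \<Longrightarrow> eps * Lam lam j \<le> L * \<Phi> / real m"
  using eps_Lam_max_le[OF eps_pos eps_lt] Lam_le_Lam_max[of j m] eps_pos
  by (auto intro: order_trans[OF mult_left_mono])

lemma sum_post_var_le: "(\<Sum>j=1..m. \<sigma> j) \<le> \<Phi>"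
proof -
  have "(\<Sum>j=1..m. \<sigma> j) \<le> (\<Sum>j=1..m. eps * Lam lam j)"
    using post_var_bounds(2) by (intro sum_mono) auto
  also have "\<dots> = eps * real m * Lam_bar lam m"
    by (simp add: mult_Lam_bar sum_distrib_left mult.assoc)
  also have "\<dots> \<le> \<Phi>" by (rule variance_term_le_Phi_star)
  finally show ?thesis .
qed

lemma sum_post_var_ge: "d / (1 + d) * (\<kappa> * \<Phi>) \<le> (\<Sum>j=1..m. \<sigma> j)"
proof -
  have "d / (1 + d) * (\<kappa> * \<Phi>) \<le> d / (1 + d) * (eps * real m * Lam_bar lam m)"
    using kappa_star_mult_Phi_star_le[OF eps_pos eps_lt] d_pos by (intro mult_left_mono) auto
  also have "\<dots> = (\<Sum>j=1..m. d / (1 + d) * (eps * Lam lam j))"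
    by (simp add: mult_Lam_bar sum_distrib_left mult.assoc)
  also have "\<dots> \<le> (\<Sum>j=1..m. \<sigma> j)"
    using post_var_bounds(3) by (intro sum_mono) auto
  finally show ?thesis .
qed

lemma sum_post_var_pos: "0 < (\<Sum>j=1..m. \<sigma> j)"
  using sum_post_var_ge d_pos kappa_star_pos Phi_pos
  by (smt (verit) divide_pos_pos mult_pos_pos)

text \<open>Assumption A gives \<open>\<sigma>\<^sub>j / \<tau>\<^sub>j \<le> sqrt (eps Lam\<^sub>j) / d\<close>.\<close>
lemma bias_le_Phi:
  assumes "\<theta> \<in> ellipsoid a eta r"
  shows "(\<Sum>j=1..m. (\<sigma> j * (eta j - \<theta> j) / tau eps j)\<^sup>2) \<le> \<Phi>"
proof -
  have "(\<Sum>j=1..m. (\<sigma> j * (eta j - \<theta> j) / tau eps j)\<^sup>2)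
      \<le> (\<Sum>j=1..m. L * \<Phi> / (real m * d\<^sup>2) * (\<theta> j - eta j)\<^sup>2)"
  proof (rule sum_mono)
    fix j assume j: "j \<in> {1..m}"
    have "(\<sigma> j * (eta j - \<theta> j) / tau eps j)\<^sup>2 = (\<sigma> j / tau eps j)\<^sup>2 * (\<theta> j - eta j)\<^sup>2"
      by (simp add: power2_eq_square field_simps)
    also have "\<dots> \<le> eps * Lam lam j / d\<^sup>2 * (\<theta> j - eta j)\<^sup>2"
      using post_var_bounds(4)[OF j] by (intro mult_right_mono) auto
    also have "\<dots> \<le> L * \<Phi> / (real m * d\<^sup>2) * (\<theta> j - eta j)\<^sup>2"
      using divide_right_mono[OF eps_Lam_le[OF j], of "d\<^sup>2"]
      by (intro mult_right_mono) (simp_all add: divide_divide_eq_left)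
    finally show "(\<sigma> j * (eta j - \<theta> j) / tau eps j)\<^sup>2 \<le> L * \<Phi> / (real m * d\<^sup>2) * (\<theta> j - eta j)\<^sup>2" .
  qed
  also have "\<dots> = L * \<Phi> / (real m * d\<^sup>2) * (\<Sum>j=1..m. (\<theta> j - eta j)\<^sup>2)"
    by (simp add: sum_distrib_left)
  also have "\<dots> \<le> L * \<Phi> / (real m * d\<^sup>2) * r"
    using ellipsoid_head_le[OF assms] L_ge_1 Phi_pos d_pos by (intro mult_left_mono) auto
  also have "\<dots> = (r * L) * \<Phi> / (d\<^sup>2 * real m)" by (simp add: field_simps)
  also have "\<dots> \<le> (d\<^sup>2 * real m) * \<Phi> / (d\<^sup>2 * real m)"
    using admissible Phi_pos by (intro divide_right_mono mult_right_mono) (auto simp: admissible_def)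
  also have "\<dots> = \<Phi>" using d_pos m_ge_1 by simp
  finally show ?thesis .
qed

lemma tail_le_Phi:
  assumes "\<theta> \<in> ellipsoid a eta r"
  shows "(\<Sum>n. (eta (Suc (n+m)) - \<theta> (Suc (n+m)))\<^sup>2) \<le> r * \<Phi>"
  using order_trans[OF ellipsoid_tail_le[OF assms m_ge_1] mult_left_mono[OF a_m_star_le_Phi_star[of eps]]]
    r_pos by simp

lemma tail_nonneg:
  assumes "\<theta> \<in> ellipsoid a eta r"
  shows "0 \<le> (\<Sum>n. (eta (Suc (n+m)) - \<theta> (Suc (n+m)))\<^sup>2)"
  using ellipsoid_summable[OF assms]
    summable_iff_shift[where k=m and f="\<lambda>j. (eta (Suc j) - \<theta> (Suc j))\<^sup>2"]
  by (intro suminf_nonneg) auto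

lemma Phi_div_K_le: "\<Phi> / K \<le> (\<Sum>j=1..m. \<sigma> j) / 10"
proof -
  have "\<Phi> / K \<le> \<Phi> / (10 * ((1 + d) / d) / \<kappa>)"
  proof (rule divide_left_mono[OF K_ge_kappa])
    have "0 < 10 * ((1 + d) / d) / \<kappa>" using d_pos kappa_star_pos by simp
    then show "0 < K * (10 * ((1 + d) / d) / \<kappa>)" using K_pos by (rule mult_pos_pos[rotated])
  qed (use Phi_pos in simp)
  also have "\<dots> = d / (1 + d) * (\<kappa> * \<Phi>) / 10" using d_pos by (simp add: field_simps)
  also have "\<dots> \<le> (\<Sum>j=1..m. \<sigma> j) / 10" by (rule divide_right_mono[OF sum_post_var_ge]) simp
  finally show ?thesis .
qed

lemma band_room:
  assumes "\<theta> \<in> ellipsoid a eta r"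
  shows "(\<Sum>j=1..m. \<sigma> j) + 3 * max 1 r * \<Phi> + (\<Sum>n. (eta (Suc (n+m)) - \<theta> (Suc (n+m)))\<^sup>2)
    \<le> K * \<Phi> / 2"
proof -
  have "(\<Sum>j=1..m. \<sigma> j) + 3 * max 1 r * \<Phi> + (\<Sum>n. (eta (Suc (n+m)) - \<theta> (Suc (n+m)))\<^sup>2)
      \<le> \<Phi> + 3 * max 1 r * \<Phi> + r * \<Phi>"
    using sum_post_var_le tail_le_Phi[OF assms] by simp
  also have "\<dots> \<le> 5 * max 1 r * \<Phi>"
  proof -
    have "1 * \<Phi> \<le> max 1 r * \<Phi>" "r * \<Phi> \<le> max 1 r * \<Phi>"
      using Phi_pos by (intro mult_right_mono; simp)+
    then show ?thesis by linarith
  qed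
  also have "\<dots> \<le> K * \<Phi> / 2"
    using mult_right_mono[OF K_ge, of \<Phi>] Phi_pos by simp
  finally show ?thesis .
qed

text \<open>Chebyshev under the posterior: the squared error concentrates around posterior variance plus
  squared mean error, which is at least \<open>2 \<Phi> / K\<close> and at most \<open>K \<Phi> / 2\<close> minus the tail.\<close>
lemma posterior_band_prob_ge:
  assumes \<theta>: "\<theta> \<in> ellipsoid a eta r"
    and close: "(\<Sum>j=1..m. (post_mean lam eta tau eps Y j - \<theta> j)\<^sup>2) \<le> 3 * max 1 r * \<Phi>"
  shows "1 - (16 * L * (1 + d) / (d * \<kappa>) + 8 * L) / real m \<le>
    measure (posterior lam eta tau eps m Y) {v \<in> space (posterior lam eta tau eps m Y).
      \<Phi> / K \<le> sqnorm (\<lambda>j. v j - \<theta> j) \<and> sqnorm (\<lambda>j. v j - \<theta> j) \<le> K * \<Phi>}"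
proof -
  define P where "P j = (if 1 \<le> j \<and> j \<le> m
      then density lborel (normal_density (post_mean lam eta tau eps Y j) (sqrt (\<sigma> j)))
      else return borel (eta j))" for j
  have post: "posterior lam eta tau eps m Y = PiM UNIV P"
    unfolding posterior_def P_def ..
  have P_prob: "prob_space (P j)" for j
    unfolding P_def by (rule prob_space_posterior_component[OF eps_pos eps_lt_1])
  define S where "S = (\<Sum>j=1..m. \<sigma> j)"
  define Q where "Q = (\<Sum>j=1..m. (post_mean lam eta tau eps Y j - \<theta> j)\<^sup>2)"
  define T where "T = (\<Sum>n. (eta (Suc (n+m)) - \<theta> (Suc (n+m)))\<^sup>2)"
  define ell where "ell = L * \<Phi> / real m"
  have Q_nonneg: "0 \<le> Q" by (simp add: Q_def sum_nonneg)
  have S_ge: "d / (1 + d) * (\<kappa> * \<Phi>) \<le> S + Q"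
    using sum_post_var_ge Q_nonneg by (simp add: S_def)
  have S_pos: "0 < S" and SQ_pos: "0 < S + Q"
    using sum_post_var_pos Q_nonneg by (simp_all add: S_def)
  have "1 - 16 * ell / (S + Q) - 8 * ell / (K * \<Phi>) \<le> measure (PiM UNIV P)
     {v \<in> space (PiM UNIV P). \<Phi> / K \<le> (\<Sum>j=1..m. (v j - \<theta> j)\<^sup>2) + T \<and> (\<Sum>j=1..m. (v j - \<theta> j)\<^sup>2) + T \<le> K * \<Phi>}"
  proof (rule prob_PiM_normal_sum_sq_band_ge[where s="\<lambda>j. sqrt (\<sigma> j)" and \<mu>="post_mean lam eta tau eps Y"])
    show "(sqrt (\<sigma> j))\<^sup>2 \<le> ell" if "j \<in> {1..m}" for j
      using post_var_bounds(1,2)[OF that] eps_Lam_le[OF that] by (simp add: ell_def)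
    show "S + Q = (\<Sum>j=1..m. (sqrt (\<sigma> j))\<^sup>2 + (post_mean lam eta tau eps Y j - \<theta> j)\<^sup>2)"
      using post_var_bounds(1) by (simp add: S_def Q_def sum.distrib less_imp_le)
    have "\<Phi> / K \<le> S / 10" unfolding S_def by (rule Phi_div_K_le)
    also have "S / 10 \<le> (S + Q) / 2" using S_pos Q_nonneg by simp
    finally show "\<Phi> / K \<le> (S + Q) / 2" .
    show "S + Q + T \<le> K * \<Phi> / 2"
      using band_room[OF \<theta>] close unfolding S_def Q_def T_def by linarith
  qed (use P_prob SQ_pos tail_nonneg[OF \<theta>] post_var_bounds(1) in \<open>auto simp: P_def T_def\<close>)
  also have "\<dots> = measure (posterior lam eta tau eps m Y) {v \<in> space (posterior lam eta tau eps m Y).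
      \<Phi> / K \<le> sqnorm (\<lambda>j. v j - \<theta> j) \<and> sqnorm (\<lambda>j. v j - \<theta> j) \<le> K * \<Phi>}"
    unfolding post
    by (rule measure_PiM_sqnorm_band_eq[OF P_prob _ _ ellipsoid_summable[OF \<theta>] T_def, symmetric])
      (auto simp: P_def)
  finally have band: "1 - 16 * ell / (S + Q) - 8 * ell / (K * \<Phi>) \<le> \<dots>" .
  have "16 * ell / (S + Q) \<le> 16 * ell / (d / (1 + d) * (\<kappa> * \<Phi>))"
    using S_ge SQ_pos d_pos kappa_star_pos Phi_pos L_ge_1 m_ge_1
    by (intro divide_left_mono) (auto simp: ell_def intro!: mult_pos_pos)
  also have "\<dots> = 16 * L * (1 + d) / (d * \<kappa>) / real m"
    using d_pos kappa_star_pos Phi_pos m_ge_1 by (simp add: ell_def field_simps)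
  finally have t1: "16 * ell / (S + Q) \<le> 16 * L * (1 + d) / (d * \<kappa>) / real m" .
  have "8 * ell / (K * \<Phi>) \<le> 8 * ell / (1 * \<Phi>)"
    using K_ge Phi_pos L_ge_1 m_ge_1 r_pos
    by (intro divide_left_mono mult_right_mono) (auto simp: ell_def le_max_iff_disj)
  also have "\<dots> = 8 * L / real m" using Phi_pos by (simp add: ell_def)
  finally have t2: "8 * ell / (K * \<Phi>) \<le> 8 * L / real m" .
  show ?thesis using band t1 t2 by (simp add: add_divide_distrib)
qed

text \<open>Under the data law the posterior mean error is an affine function of independent Gaussians
  with mean square at most \<open>2 \<Phi>\<close> (variance plus bias), so Chebyshev bounds the chance that it
  exceeds \<open>3 max 1 r \<Phi>\<close>.\<close>
lemma data_prob_far_le: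
  assumes \<theta>: "\<theta> \<in> ellipsoid a eta r"
  shows "measure (data_law lam eps \<theta>) {Y \<in> space (data_law lam eps \<theta>).
      3 * max 1 r * \<Phi> < (\<Sum>j=1..m. (post_mean lam eta tau eps Y j - \<theta> j)\<^sup>2)} \<le> 8 * L / real m"
proof -
  define N where "N j = density lborel (normal_density (lam j * \<theta> j) (sqrt eps))" for j
  define \<alpha> where "\<alpha> j = \<sigma> j * lam j / eps" for j
  define b where "b j = \<sigma> j * (eta j - \<theta> j) / tau eps j" for j
  define E where "E = (\<Sum>j=1..m. (\<alpha> j * sqrt eps)\<^sup>2 + (\<alpha> j * (lam j * \<theta> j) + (b j - \<alpha> j * (lam j * \<theta> j)))\<^sup>2)"
  define ell where "ell = L * \<Phi> / real m"
  have data: "data_law lam eps \<theta> = PiM UNIV N" unfolding data_law_def N_def ..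
  have err: "(\<Sum>j=1..m. (post_mean lam eta tau eps Y j - \<theta> j)\<^sup>2)
      = (\<Sum>j=1..m. (\<alpha> j * Y j + (b j - \<alpha> j * (lam j * \<theta> j)))\<^sup>2)" for Y
  proof (intro sum.cong refl)
    fix j assume "j \<in> {1..m}"
    then have "lam j \<noteq> 0" "0 < tau eps j" using lam_nonzero tau_pos[OF eps_pos eps_lt_1] by auto
    then have "post_mean lam eta tau eps Y j - \<theta> j = \<alpha> j * (Y j - lam j * \<theta> j) + b j"
      using post_mean_minus_eq[OF eps_pos] by (simp add: \<alpha>_def b_def)
    also have "\<dots> = \<alpha> j * Y j + (b j - \<alpha> j * (lam j * \<theta> j))" by (simp add: algebra_simps)
    finally show "(post_mean lam eta tau eps Y j - \<theta> j)\<^sup>2 = (\<alpha> j * Y j + (b j - \<alpha> j * (lam j * \<theta> j)))\<^sup>2"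
      by simp
  qed
  have noise_le: "(\<alpha> j * sqrt eps)\<^sup>2 \<le> \<sigma> j" if "j \<in> {1..m}" for j
    using post_var_bounds(5)[OF that] by (simp add: \<alpha>_def)
  have "E \<le> (\<Sum>j=1..m. \<sigma> j) + (\<Sum>j=1..m. (b j)\<^sup>2)"
    unfolding E_def sum.distrib[symmetric] using noise_le by (intro sum_mono) auto
  also have "\<dots> \<le> 2 * \<Phi>"
    using sum_post_var_le bias_le_Phi[OF \<theta>] by (simp add: b_def)
  finally have E_le: "E \<le> 2 * \<Phi>" .
  have "measure (PiM UNIV N) {Y \<in> space (PiM UNIV N).
      3 * max 1 r * \<Phi> < (\<Sum>j=1..m. (post_mean lam eta tau eps Y j - \<theta> j)\<^sup>2)}
    \<le> measure (PiM UNIV N) {Y \<in> space (PiM UNIV N).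
      \<Phi> \<le> \<bar>(\<Sum>j=1..m. (\<alpha> j * Y j + (b j - \<alpha> j * (lam j * \<theta> j)))\<^sup>2) - E\<bar>}"
  proof (rule finite_measure.finite_measure_mono)
    show "finite_measure (PiM UNIV N)"
      using prob_space_data_law[OF eps_pos, of \<theta>] unfolding data by (rule prob_space.finite_measure)
    have "1 * \<Phi> \<le> max 1 r * \<Phi>" using Phi_pos by (intro mult_right_mono) auto
    then have "E + \<Phi> \<le> 3 * max 1 r * \<Phi>" using E_le by linarith
    then show "{Y \<in> space (PiM UNIV N). 3 * max 1 r * \<Phi> < (\<Sum>j=1..m. (post_mean lam eta tau eps Y j - \<theta> j)\<^sup>2)}
      \<subseteq> {Y \<in> space (PiM UNIV N). \<Phi> \<le> \<bar>(\<Sum>j=1..m. (\<alpha> j * Y j + (b j - \<alpha> j * (lam j * \<theta> j)))\<^sup>2) - E\<bar>}"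
      unfolding err by auto
    have [measurable]: "(\<lambda>Y. Y j) \<in> borel_measurable (PiM UNIV N)" for j
      using measurable_component_singleton[of j UNIV N] by (simp add: N_def)
    show "{Y \<in> space (PiM UNIV N). \<Phi> \<le> \<bar>(\<Sum>j=1..m. (\<alpha> j * Y j + (b j - \<alpha> j * (lam j * \<theta> j)))\<^sup>2) - E\<bar>}
      \<in> sets (PiM UNIV N)" by measurable
  qed
  also have "\<dots> \<le> 4 * ell * E / \<Phi>\<^sup>2"
  proof (rule prob_PiM_normal_sum_sq_deviation_le[OF _ _ _ _ _ E_def Phi_pos])
    show "prob_space (N j)" for j using eps_pos by (simp add: N_def prob_space_normal_density)
    show "(\<alpha> j * sqrt eps)\<^sup>2 \<le> ell" if "j \<in> {1..m}" for j
      using noise_le[OF that] post_var_bounds(2)[OF that] eps_Lam_le[OF that] by (simp add: ell_def)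
  qed (use eps_pos in \<open>simp_all add: N_def\<close>)
  also have "\<dots> \<le> 4 * ell * (2 * \<Phi>) / \<Phi>\<^sup>2"
    using E_le Phi_pos L_ge_1 by (intro divide_right_mono mult_left_mono) (auto simp: ell_def)
  also have "\<dots> = 8 * L / real m" using Phi_pos by (simp add: ell_def power2_eq_square)
  finally show ?thesis unfolding data .
qed

lemma expected_posterior_band_ge:
  assumes \<theta>: "\<theta> \<in> ellipsoid a eta r"
  shows "1 - (16 * L * (1 + d) / (d * \<kappa>) + 16 * L) / real m \<le>
    integral\<^sup>L (data_law lam eps \<theta>) (\<lambda>Y. measure (posterior lam eta tau eps m Y)
      {v \<in> space (posterior lam eta tau eps m Y).
         \<Phi> / K \<le> sqnorm (\<lambda>j. v j - \<theta> j) \<and> sqnorm (\<lambda>j. v j - \<theta> j) \<le> K * \<Phi>})"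
    (is "_ \<le> integral\<^sup>L ?D ?g")
proof -
  interpret D: prob_space ?D by (rule prob_space_data_law[OF eps_pos])
  define c where "c = (16 * L * (1 + d) / (d * \<kappa>) + 8 * L) / real m"
  define Far where "Far = {Y \<in> space ?D.
      3 * max 1 r * \<Phi> < (\<Sum>j=1..m. (post_mean lam eta tau eps Y j - \<theta> j)\<^sup>2)}"
  have [measurable]: "(\<lambda>Y. Y j) \<in> borel_measurable ?D" for j
    unfolding data_law_def using measurable_component_singleton[of j UNIV] by simp
  have Far: "Far \<in> sets ?D" unfolding Far_def post_mean_def by measurable
  have g: "?g \<in> borel_measurable ?D"
    by (rule measurable_posterior_band[OF eps_pos eps_lt_1 \<theta>])
  have g_bounds: "0 \<le> ?g Y" "?g Y \<le> 1" for Y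
    using prob_space.prob_le_1[OF prob_space_posterior[OF eps_pos eps_lt_1]] by auto
  have c_nonneg: "0 \<le> c"
    using L_ge_1 d_pos kappa_star_pos unfolding c_def by (intro divide_nonneg_nonneg) auto
  have lower: "(1 - c) - indicator Far Y \<le> ?g Y" if "Y \<in> space ?D" for Y
  proof (cases "Y \<in> Far")
    case True
    then have "(1 - c) - indicator Far Y = - c" by simp
    with g_bounds(1)[of Y] c_nonneg show ?thesis by linarith
  next
    case False
    then show ?thesis
      using posterior_band_prob_ge[OF \<theta>] that by (auto simp: Far_def c_def not_less)
  qed
  have Far_int: "integrable ?D (indicator Far :: _ \<Rightarrow> real)"
    using Far by (intro integrable_real_indicator) (auto simp: less_top[symmetric] D.emeasure_finite)
  have "1 - c - 8 * L / real m \<le> (1 - c) - measure ?D Far"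
    using data_prob_far_le[OF \<theta>] unfolding Far_def by linarith
  also have "\<dots> = integral\<^sup>L ?D (\<lambda>Y. (1 - c) - indicator Far Y)"
    using Far Far_int by (subst Bochner_Integration.integral_diff) (auto simp: D.prob_space)
  also have "\<dots> \<le> integral\<^sup>L ?D ?g"
  proof (rule integral_mono)
    show "integrable ?D (\<lambda>Y. (1 - c) - indicator Far Y)"
      using Far_int by (intro Bochner_Integration.integrable_diff) auto
    show "integrable ?D ?g"
    proof (rule D.integrable_const_bound[where B=1])
      show "AE Y in ?D. norm (?g Y) \<le> 1"
        using g_bounds by (intro AE_I2) (simp only: real_norm_def abs_of_nonneg)
    qed (rule g)
  qed (rule lower)
  finally show ?thesis unfolding c_def by (simp add: add_divide_distrib)
qed

end

theorem posterior_contraction: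
  "((\<lambda>eps. INF \<theta> \<in> ellipsoid a eta r.
      integral\<^sup>L (data_law lam eps \<theta>)
        (\<lambda>Y. measure (posterior lam eta tau eps (m_star a lam eps) Y)
           {v \<in> space (posterior lam eta tau eps (m_star a lam eps) Y).
              Phi_star a lam eps / K \<le> sqnorm (\<lambda>j. v j - \<theta> j) \<and>
              sqnorm (\<lambda>j. v j - \<theta> j) \<le> K * Phi_star a lam eps}))
    \<longlongrightarrow> 1) (at_right 0)"
  (is "((\<lambda>eps. INF \<theta> \<in> ellipsoid a eta r. ?I eps \<theta>) \<longlongrightarrow> 1) _")
proof (rule tendsto_sandwich)
  define C where "C = 16 * L * (1 + d) / (d * \<kappa>) + 16 * L"
  have eta: "eta \<in> ellipsoid a eta r" using r_pos by (simp add: ellipsoid_def)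
  have bdd: "bdd_below (?I eps ` ellipsoid a eta r)" for eps
    by (intro bdd_belowI2[of _ 0] integral_nonneg) auto
  show "eventually (\<lambda>eps. 1 - C / real (m_star a lam eps) \<le> (INF \<theta> \<in> ellipsoid a eta r. ?I eps \<theta>))
      (at_right 0)"
    using eventually_admissible
  proof eventually_elim
    case (elim eps)
    show ?case
      using expected_posterior_band_ge[OF elim] eta unfolding C_def by (intro cINF_greatest) auto
  qed
  have "eventually (\<lambda>eps. 0 < eps \<and> eps < 1) (at_right (0::real))"
    using eventually_at_right_real[of 0 1] by (auto elim: eventually_mono)
  then show "eventually (\<lambda>eps. (INF \<theta> \<in> ellipsoid a eta r. ?I eps \<theta>) \<le> 1) (at_right 0)"
  proof eventually_elim
    case (elim eps)
    then have "0 < eps" "eps < 1" by simp_all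
    then show ?case
      using integral_posterior_band_le_1[OF _ _ eta] by (intro cINF_lower2[OF bdd eta])
  qed
  have m: "filterlim (\<lambda>eps. real (m_star a lam eps)) at_infinity (at_right 0)"
    by (rule filterlim_at_top_imp_at_infinity filterlim_compose[OF filterlim_real_sequentially filterlim_m_star])+
  show "((\<lambda>eps. 1 - C / real (m_star a lam eps)) \<longlongrightarrow> 1) (at_right 0)"
    using tendsto_diff[OF tendsto_const tendsto_divide_0[OF tendsto_const m], of 1 C] by simp
qed (rule tendsto_const)

end

theorem mainTheorem10:
  fixes lam eta a :: "nat \<Rightarrow> real"
    and tau :: "real \<Rightarrow> nat \<Rightarrow> real"
    and d r L eps_o :: real
  assumes lam_bdd: "\<exists>B. \<forall>j\<ge>1. \<bar>lam j\<bar> \<le> B"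
    and lam_nz: "\<forall>j\<ge>1. lam j \<noteq> 0"
    and tau_pos: "\<forall>eps. 0 < eps \<and> eps < 1 \<longrightarrow> (\<forall>j\<ge>1. 0 < tau eps j)"
    and a_pos: "\<forall>j\<ge>1. 0 < a j"
    and a_mono: "\<forall>j k. 1 \<le> j \<and> j \<le> k \<longrightarrow> a k \<le> a j"
    and a_one: "a 1 = 1"
    and a_lim: "a \<longlonglongrightarrow> 0"
    and eps_o: "0 < eps_o" "eps_o < 1"
    and d_pos: "0 < d"
    and assmA: "\<forall>eps. 0 < eps \<and> eps < 1 \<longrightarrow>
       (\<forall>j. 1 \<le> j \<and> j \<le> G_eps lam eps \<longrightarrow>
          d * max (sqrt eps * sqrt (Lam lam j)) (eps * Lam lam j) \<le> tau eps j)"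
    and assmM: "0 < kappa_star a lam eps_o"
    and r_pos: "0 < r"
    and L_ge: "1 \<le> L"
    and L_bound: "\<forall>eps. 0 < eps \<and> eps < eps_o \<longrightarrow>
       eps * real (m_star a lam eps) * Lam_max lam (m_star a lam eps) / Phi_star a lam eps \<le> L"
  shows "let K = 10 * max (1 + 1 / d) (r / d\<^sup>2) * max 1 r * (L / kappa_star a lam eps_o) in
    ((\<lambda>eps. INF \<theta> \<in> ellipsoid a eta r.
        integral\<^sup>L (data_law lam eps \<theta>)
          (\<lambda>Y. measure (posterior lam eta tau eps (m_star a lam eps) Y)
             {v \<in> space (posterior lam eta tau eps (m_star a lam eps) Y).
                Phi_star a lam eps / K \<le> sqnorm (\<lambda>j. v j - \<theta> j) \<and>
                sqnorm (\<lambda>j. v j - \<theta> j) \<le> K * Phi_star a lam eps}))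
      \<longlongrightarrow> 1) (at_right 0)"
proof -
  obtain B where B: "\<forall>j\<ge>1. \<bar>lam j\<bar> \<le> B" using lam_bdd by blast
  interpret sieve_posterior lam a B eta tau d r L eps_o
  proof unfold_locales
    show "\<bar>lam j\<bar> \<le> B" "lam j \<noteq> 0" "0 < a j" if "1 \<le> j" for j
      using B lam_nz a_pos that by simp_all
    show "a k \<le> a j" if "1 \<le> j" "j \<le> k" for j k using a_mono that by blast
    show "0 < tau eps j" if "0 < eps" "eps < 1" "1 \<le> j" for eps j using tau_pos that by blast
    show "d * max (sqrt eps * sqrt (Lam lam j)) (eps * Lam lam j) \<le> tau eps j"
      if "0 < eps" "eps < 1" "1 \<le> j" "j \<le> G_eps lam eps" for eps j
      using assmA that by blast
    show "eps * real (m_star a lam eps) * Lam_max lam (m_star a lam eps) / Phi_star a lam eps \<le> L"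
      if "0 < eps" "eps < eps_o" for eps
      using L_bound that by blast
  qed (fact a_one a_lim eps_o d_pos assmM r_pos L_ge)+
  show ?thesis
    unfolding Let_def K_def[symmetric] by (rule posterior_contraction)
qed

end
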